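(* Let $T:\mathcal{M}_N\to\mathcal{M}_N$ be a bistochastic channel with $T=\hat T$, such that $\hat T$ is strictly contractive with rate $C\in[0,1)$. Then every eigenvalue $\lambda\neq1$ of $\hat T$ satisfies $|\lambda|\le C$, and for every density matrix $\sigma\in\mathcal{D}_N$, $$S[\hat T(\sigma)]-S(\sigma)\ \ge\ \frac{1-C^2}{2}\,\big\|\sigma-N^{-1}\mathbf{1}\big\|_2^2 .$$
   Context: $\mathcal{M}_N$ is the algebra of $N\times N$ complex matrices, $\mathbf{1}$ the identity, $\mathcal{D}_N$ the set of $N\times N$ density matrices. A channel is a linear unital completely positive map $T:\mathcal{M}_N\to\mathcal{M}_N$; its dual $\hat T$ is defined by $\mathrm{tr}[\hat T(A)B]=\mathrm{tr}[A\,T(B)]$ for all $A,B$. $T$ is bistochastic if $T(\mathbf{1})=\hat T(\mathbf{1})=\mathbf{1}$. $\hat T$ is strictly contractive with rate $C\in[0,1)$ if $\|\hat T(\sigma)-\hat T(\sigma')\|_1\le C\|\sigma-\sigma'\|_1$ for all $\sigma,\sigma'\in\mathcal{D}_N$, with $\|A\|_1=\mathrm{tr}(A^*A)^{1/2}$. $\|A\|_2=[\mathrm{tr}(A^*A)]^{1/2}$, and $S(\sigma)=-\mathrm{tr}(\sigma\ln\sigma)$ is the von Neumann entropy. *)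

theory Defs
  imports "Jordan_Normal_Form.Schur_Decomposition" "HOL-Computational_Algebra.Polynomial"
begin

(* M_N is modelled as carrier_mat N N of complex matrices (Jordan_Normal_Form). *)

definition trace :: "complex mat \<Rightarrow> complex" where
  "trace A = (\<Sum>i<dim_row A. A $$ (i, i))"

definition qform :: "complex mat \<Rightarrow> complex vec \<Rightarrow> complex" where
  "qform A v = conjugate v \<bullet> (A *\<^sub>v v)"

definition psd :: "nat \<Rightarrow> complex mat \<Rightarrow> bool" where
  "psd N A \<longleftrightarrow> A \<in> carrier_mat N N \<and> mat_adjoint A = A \<and>
     (\<forall>v \<in> carrier_vec N. Im (qform A v) = 0 \<and> Re (qform A v) \<ge> 0)"

(* a k x k block matrix with N x N blocks B i j, i.e. an element of M_k \<otimes> M_N,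
   is positive semidefinite *)
definition psd_block :: "nat \<Rightarrow> nat \<Rightarrow> (nat \<Rightarrow> nat \<Rightarrow> complex mat) \<Rightarrow> bool" where
  "psd_block k N B \<longleftrightarrow> (\<forall>i<k. \<forall>j<k. B i j \<in> carrier_mat N N) \<and>
     (\<forall>i<k. \<forall>j<k. mat_adjoint (B i j) = B j i) \<and>
     (\<forall>v. (\<forall>i<k. v i \<in> carrier_vec N) \<longrightarrow>
        (let q = (\<Sum>i<k. \<Sum>j<k. conjugate (v i) \<bullet> (B i j *\<^sub>v v j)) in Im q = 0 \<and> Re q \<ge> 0))"

definition linear_map_mat :: "nat \<Rightarrow> (complex mat \<Rightarrow> complex mat) \<Rightarrow> bool" where
  "linear_map_mat N T \<longleftrightarrow>
     (\<forall>A \<in> carrier_mat N N. T A \<in> carrier_mat N N) \<and>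
     (\<forall>A \<in> carrier_mat N N. \<forall>B \<in> carrier_mat N N. T (A + B) = T A + T B) \<and>
     (\<forall>A \<in> carrier_mat N N. \<forall>c. T (c \<cdot>\<^sub>m A) = c \<cdot>\<^sub>m T A)"

(* complete positivity: id_k \<otimes> T is positive for every k *)
definition completely_positive :: "nat \<Rightarrow> (complex mat \<Rightarrow> complex mat) \<Rightarrow> bool" where
  "completely_positive N T \<longleftrightarrow>
     (\<forall>k B. psd_block k N B \<longrightarrow> psd_block k N (\<lambda>i j. T (B i j)))"

definition channel :: "nat \<Rightarrow> (complex mat \<Rightarrow> complex mat) \<Rightarrow> bool" where
  "channel N T \<longleftrightarrow> linear_map_mat N T \<and> T (1\<^sub>m N) = 1\<^sub>m N \<and> completely_positive N T"

definition is_dual :: "nat \<Rightarrow> (complex mat \<Rightarrow> complex mat) \<Rightarrow> (complex mat \<Rightarrow> complex mat) \<Rightarrow> bool" where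
  "is_dual N T Td \<longleftrightarrow> (\<forall>A \<in> carrier_mat N N. \<forall>B \<in> carrier_mat N N.
      trace (Td A * B) = trace (A * T B))"

definition bistochastic :: "nat \<Rightarrow> (complex mat \<Rightarrow> complex mat) \<Rightarrow> (complex mat \<Rightarrow> complex mat) \<Rightarrow> bool" where
  "bistochastic N T Td \<longleftrightarrow> T (1\<^sub>m N) = 1\<^sub>m N \<and> Td (1\<^sub>m N) = 1\<^sub>m N"

definition density :: "nat \<Rightarrow> complex mat \<Rightarrow> bool" where
  "density N \<sigma> \<longleftrightarrow> psd N \<sigma> \<and> trace \<sigma> = 1"

definition eigvals_mset :: "complex mat \<Rightarrow> complex multiset" where
  "eigvals_mset A = proots (char_poly A)"

(* trace norm tr (A^* A)^{1/2}: sum of the square roots of the eigenvalues of A^* A *)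
definition trace_norm :: "complex mat \<Rightarrow> real" where
  "trace_norm A = (\<Sum>\<mu> \<in># eigvals_mset (mat_adjoint A * A). sqrt (Re \<mu>))"

definition hs_norm :: "complex mat \<Rightarrow> real" where
  "hs_norm A = sqrt (Re (trace (mat_adjoint A * A)))"

definition eta :: "real \<Rightarrow> real" where
  "eta x = (if x = 0 then 0 else x * ln x)"

(* von Neumann entropy S(\<sigma>) = - tr (\<sigma> ln \<sigma>) = - \<Sum> \<lambda> ln \<lambda> over eigenvalues *)
definition vn_entropy :: "complex mat \<Rightarrow> real" where
  "vn_entropy \<sigma> = - (\<Sum>x \<in># eigvals_mset \<sigma>. eta (Re x))"

definition strictly_contractive :: "nat \<Rightarrow> (complex mat \<Rightarrow> complex mat) \<Rightarrow> real \<Rightarrow> bool" where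
  "strictly_contractive N Td C \<longleftrightarrow> 0 \<le> C \<and> C < 1 \<and>
     (\<forall>\<sigma> \<sigma>'. density N \<sigma> \<longrightarrow> density N \<sigma>' \<longrightarrow>
        trace_norm (Td \<sigma> - Td \<sigma>') \<le> C * trace_norm (\<sigma> - \<sigma>'))"

definition map_eigenvalue :: "nat \<Rightarrow> (complex mat \<Rightarrow> complex mat) \<Rightarrow> complex \<Rightarrow> bool" where
  "map_eigenvalue N Td z \<longleftrightarrow> (\<exists>X \<in> carrier_mat N N. X \<noteq> 0\<^sub>m N N \<and> Td X = z \<cdot>\<^sub>m X)"

end

theory Submission
  imports Defs "HOL-Analysis.Convex"
begin

(* For a density matrix s put D k = T^k s - 1/N. Self-duality and Cauchy-Schwarz give
   ||T D||_2^2 = tr (D T^2 D) <= ||D||_2 ||T^2 D||_2, so k |-> ||D k||_2 is log-convex, while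
   strict contractivity in trace norm bounds it by K C^k. Such a sequence cannot shrink faster
   than its first ratio, hence ||T s - 1/N||_2 <= C ||s - 1/N||_2.

   In eigenbases of s and T s, the eigenvalues of T s are a doubly stochastic image of those
   of s. As x ln x - x^2/2 is convex on [0, 1], this gives
   S(T s) - S(s) >= (||s||_2^2 - ||T s||_2^2) / 2 = (||s - 1/N||_2^2 - ||T s - 1/N||_2^2) / 2,
   and the contraction bounds the right-hand side below by (1 - C^2)/2 ||s - 1/N||_2^2.

   A traceless Hermitian Y is a positive multiple of r - 1/N for some density matrix r, so T
   contracts it by C and keeps it Hermitian. An eigenvector for an eigenvalue z <> 1 is
   traceless; splitting it into Hermitian parts yields |z| <= C. *)

section \<open>Adjoints, normalized vectors and unitary matrices\<close>

lemma adjoint_dim [simp]: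
  "dim_row (mat_adjoint A) = dim_col A" "dim_col (mat_adjoint A) = dim_row A"
  unfolding mat_adjoint_def mat_of_rows_def by auto

lemma adjoint_index [simp]:
  "i < dim_col A \<Longrightarrow> j < dim_row A \<Longrightarrow> mat_adjoint A $$ (i, j) = cnj (A $$ (j, i))"
  unfolding mat_adjoint_def mat_of_rows_def by auto

lemma adjoint_carrier [simp]: "(A :: complex mat) \<in> carrier_mat n m \<Longrightarrow> mat_adjoint A \<in> carrier_mat m n"
  unfolding carrier_mat_def by auto

lemma index_mult_mat_sum:
  "A \<in> carrier_mat n k \<Longrightarrow> B \<in> carrier_mat k m \<Longrightarrow> i < n \<Longrightarrow> j < m \<Longrightarrow>
   (A * B) $$ (i, j) = (\<Sum>l<k. A $$ (i, l) * B $$ (l, j))"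
  by (auto simp: scalar_prod_def atLeast0LessThan intro!: sum.cong)

lemma row_col_scalar_prod:
  "i < dim_row A \<Longrightarrow> j < dim_col B \<Longrightarrow> dim_col A = dim_row B \<Longrightarrow>
   row A i \<bullet> col B j = (\<Sum>l<dim_row B. A $$ (i, l) * B $$ (l, j))"
  by (auto simp: scalar_prod_def atLeast0LessThan intro!: sum.cong)

lemma assoc_mult_mat_dims:
  "dim_col A = dim_row B \<Longrightarrow> dim_col B = dim_row C \<Longrightarrow> (A * B) * C = A * (B * C)"
  by (rule assoc_mult_mat[of A "dim_row A" "dim_col A" B "dim_col B" C "dim_col C"], auto)

lemma adjoint_mult:
  assumes A: "(A :: complex mat) \<in> carrier_mat n k" and B: "B \<in> carrier_mat k m"
  shows "mat_adjoint (A * B) = mat_adjoint B * mat_adjoint A"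
proof (rule eq_matI)
  fix i j assume "i < dim_row (mat_adjoint B * mat_adjoint A)" "j < dim_col (mat_adjoint B * mat_adjoint A)"
  hence i: "i < m" and j: "j < n" using A B by auto
  have "mat_adjoint (A * B) $$ (i, j) = cnj (\<Sum>l<k. A $$ (j, l) * B $$ (l, i))"
    using index_mult_mat_sum[OF A B j i] i j A B by simp
  also have "\<dots> = (\<Sum>l<k. mat_adjoint B $$ (i, l) * mat_adjoint A $$ (l, j))"
    using i j A B by (auto simp: mult.commute intro!: sum.cong)
  also have "\<dots> = (mat_adjoint B * mat_adjoint A) $$ (i, j)"
    by (rule index_mult_mat_sum[symmetric], insert A B i j, auto)
  finally show "mat_adjoint (A * B) $$ (i, j) = (mat_adjoint B * mat_adjoint A) $$ (i, j)" .
qed (insert A B, auto)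

lemma adjoint_mult_dims:
  "dim_col (A :: complex mat) = dim_row B \<Longrightarrow> mat_adjoint (A * B) = mat_adjoint B * mat_adjoint A"
  by (rule adjoint_mult[of A "dim_row A" "dim_col A" B "dim_col B"], auto)

lemma adjoint_adjoint [simp]: "mat_adjoint (mat_adjoint (A :: complex mat)) = A"
  by (rule eq_matI, auto)

lemma adjoint_one [simp]: "mat_adjoint (1\<^sub>m n :: complex mat) = 1\<^sub>m n"
  by (rule eq_matI, auto)

lemma adjoint_minus:
  "(A :: complex mat) \<in> carrier_mat n m \<Longrightarrow> B \<in> carrier_mat n m \<Longrightarrow>
   mat_adjoint (A - B) = mat_adjoint A - mat_adjoint B"
  by (rule eq_matI, auto)

lemma adjoint_smult: "mat_adjoint (c \<cdot>\<^sub>m (A :: complex mat)) = cnj c \<cdot>\<^sub>m mat_adjoint A"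
  by (rule eq_matI, auto)

lemma smult_mat_cancel:
  assumes "c \<noteq> 0" and "(A :: complex mat) \<in> carrier_mat n m" and "B \<in> carrier_mat n m"
    and "c \<cdot>\<^sub>m A = c \<cdot>\<^sub>m B"
  shows "A = B"
proof (rule eq_matI)
  fix i j assume "i < dim_row B" "j < dim_col B"
  hence "(c \<cdot>\<^sub>m A) $$ (i, j) = (c \<cdot>\<^sub>m B) $$ (i, j)" and "i < n" "j < m"
    using assms(3,4) by auto
  thus "A $$ (i, j) = B $$ (i, j)" using assms(1-3) by auto
qed (use assms(2,3) in auto)

definition vec_norm :: "complex vec \<Rightarrow> real" where
  "vec_norm v = sqrt (\<Sum>l<dim_vec v. (cmod (v $ l))^2)"

definition vec_normalize :: "complex vec \<Rightarrow> complex vec" where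
  "vec_normalize v = (1 / complex_of_real (vec_norm v)) \<cdot>\<^sub>v v"

lemma cscalar_prod_self: "v \<bullet>c v = complex_of_real ((vec_norm v)^2)"
proof -
  have "v \<bullet>c v = (\<Sum>l<dim_vec v. complex_of_real ((cmod (v $ l))^2))"
    unfolding scalar_prod_def
    by (auto simp: atLeast0LessThan intro!: sum.cong, metis complex_norm_square of_real_power)
  thus ?thesis unfolding vec_norm_def by (simp add: sum_nonneg)
qed

lemma vec_norm_pos:
  assumes v: "v \<in> carrier_vec n" and v0: "v \<noteq> 0\<^sub>v n"
  shows "vec_norm v > 0"
proof -
  have "(\<Sum>l<n. (cmod (v $ l))^2) \<noteq> 0"
  proof
    assume "(\<Sum>l<n. (cmod (v $ l))^2) = 0"
    hence "\<forall>l<n. v $ l = 0" by (simp add: sum_nonneg_eq_0_iff)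
    hence "v = 0\<^sub>v n" using v by (intro eq_vecI, auto)
    thus False using v0 by simp
  qed
  moreover have "(\<Sum>l<n. (cmod (v $ l))^2) \<ge> 0" by (simp add: sum_nonneg)
  ultimately show ?thesis using v unfolding vec_norm_def by simp
qed

lemma vec_normalize_carrier [simp]: "v \<in> carrier_vec n \<Longrightarrow> vec_normalize v \<in> carrier_vec n"
  unfolding vec_normalize_def by simp

lemma cscalar_prod_vec_normalize:
  assumes v: "v \<in> carrier_vec n" and w: "w \<in> carrier_vec n"
  shows "vec_normalize v \<bullet>c vec_normalize w =
    complex_of_real (1 / (vec_norm v * vec_norm w)) * (v \<bullet>c w)"
  using v w unfolding vec_normalize_def
  by (simp add: conjugate_smult_vec[of "1 / complex_of_real (vec_norm w)"])

lemma cscalar_prod_vec_normalize_self: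
  assumes v: "v \<in> carrier_vec n" and v0: "v \<noteq> 0\<^sub>v n"
  shows "vec_normalize v \<bullet>c vec_normalize v = 1"
  unfolding cscalar_prod_vec_normalize[OF v v] cscalar_prod_self[of v]
  using vec_norm_pos[OF v v0] by (simp add: power2_eq_square)

definition unitary :: "nat \<Rightarrow> complex mat \<Rightarrow> bool" where
  "unitary n U \<longleftrightarrow> U \<in> carrier_mat n n \<and> mat_adjoint U * U = 1\<^sub>m n"

lemma unitary_carrier: "unitary n U \<Longrightarrow> U \<in> carrier_mat n n"
  unfolding unitary_def by auto

lemma unitary_adjoint_mult: "unitary n U \<Longrightarrow> mat_adjoint U * U = 1\<^sub>m n"
  unfolding unitary_def by auto

lemma unitary_mult_adjoint: "unitary n U \<Longrightarrow> U * mat_adjoint U = 1\<^sub>m n"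
  unfolding unitary_def using mat_mult_left_right_inverse[of "mat_adjoint U" n U] by auto

lemma unitary_one: "unitary n (1\<^sub>m n)"
  unfolding unitary_def by auto

lemma unitary_mult:
  assumes U: "unitary n U" and V: "unitary n V"
  shows "unitary n (U * V)"
proof -
  have Uc: "U \<in> carrier_mat n n" and Vc: "V \<in> carrier_mat n n"
    using U V unitary_carrier by auto
  have "mat_adjoint (U * V) * (U * V) = mat_adjoint V * ((mat_adjoint U * U) * V)"
    using Uc Vc by (simp add: adjoint_mult[OF Uc Vc] assoc_mult_mat_dims)
  thus ?thesis using Uc Vc unitary_adjoint_mult[OF U] unitary_adjoint_mult[OF V]
    unfolding unitary_def by simp
qed

lemma unitary_cancel_left:
  "unitary n U \<Longrightarrow> dim_row X = n \<Longrightarrow> mat_adjoint U * (U * X) = X"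
  using unitary_carrier[of n U] unitary_adjoint_mult[of n U]
  by (simp add: assoc_mult_mat_dims[symmetric])

lemma unitary_mat_of_cols:
  assumes us: "set us \<subseteq> carrier_vec n" "length us = n"
    and orthonormal: "\<And>i j. i < n \<Longrightarrow> j < n \<Longrightarrow> us ! j \<bullet>c us ! i = (if i = j then 1 else 0)"
  shows "unitary n (mat_of_cols n us)"
proof -
  let ?U = "mat_of_cols n us"
  have U: "?U \<in> carrier_mat n n" using us by auto
  have "mat_adjoint ?U * ?U = 1\<^sub>m n"
  proof (rule eq_matI)
    fix i j assume "i < dim_row (1\<^sub>m n :: complex mat)" "j < dim_col (1\<^sub>m n :: complex mat)"
    hence i: "i < n" and j: "j < n" by auto
    have "us ! i \<in> carrier_vec n" "us ! j \<in> carrier_vec n"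
      using us i j nth_mem by (metis subsetD)+
    hence dims: "dim_vec (us ! i) = n" "dim_vec (us ! j) = n" by auto
    have "(mat_adjoint ?U * ?U) $$ (i, j) = (\<Sum>l<n. cnj (?U $$ (l, i)) * ?U $$ (l, j))"
      using index_mult_mat_sum[of _ n n ?U n] U i j by auto
    also have "\<dots> = us ! j \<bullet>c us ! i"
      using us i j dims
      by (auto simp: scalar_prod_def atLeast0LessThan mult.commute mat_of_cols_def intro!: sum.cong)
    finally show "(mat_adjoint ?U * ?U) $$ (i, j) = 1\<^sub>m n $$ (i, j)"
      using orthonormal[OF i j] i j by simp
  qed (use U in auto)
  thus ?thesis using U unfolding unitary_def by simp
qed

lemma unitary_with_first_col:
  assumes u: "u \<in> carrier_vec n" and u1: "u \<bullet>c u = 1"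
  shows "\<exists>U. unitary n U \<and> col U 0 = u"
proof -
  interpret cof_vec_space n "TYPE(complex)" .
  have u0: "u \<noteq> 0\<^sub>v n" using u1 u by auto
  define b where "b = basis_completion u"
  from basis_completion[OF u u0, folded b_def]
  have dist_b: "distinct b" and indep: "\<not> lin_dep (set b)" and b: "set b \<subseteq> carrier_vec n"
    and hdb: "hd b = u" and len_b: "length b = n" by auto
  have n: "n \<noteq> 0" using u u0 by (intro notI, auto)
  from hdb len_b n obtain vs where bv: "b = u # vs" by (cases b, auto)
  define ws where "ws = gram_schmidt n b"
  from gram_schmidt_result[OF b dist_b indep refl, folded ws_def]
  have ws: "set ws \<subseteq> carrier_vec n" "corthogonal ws" "length ws = n" by (auto simp: len_b)
  have ws0: "ws ! 0 = u"
    using gram_schmidt_hd[OF u, of vs, folded bv ws_def] ws(3) n by (cases ws, auto)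
  have wsi: "ws ! i \<in> carrier_vec n" "ws ! i \<noteq> 0\<^sub>v n" if "i < n" for i
    using ws corthogonalD[OF ws(2), of i i] that by auto
  define us where "us = map vec_normalize ws"
  have "us ! j \<bullet>c us ! i = (if i = j then 1 else 0)" if i: "i < n" and j: "j < n" for i j
    using cscalar_prod_vec_normalize_self[OF wsi[OF i]] cscalar_prod_vec_normalize[OF wsi(1)[OF j] wsi(1)[OF i]]
      corthogonalD[OF ws(2), of j i] i j ws(3)
    by (auto simp: us_def)
  hence U: "unitary n (mat_of_cols n us)"
    using ws unfolding us_def by (intro unitary_mat_of_cols, auto)
  have "(vec_norm u)^2 = 1" using cscalar_prod_self[of u] u1 by (metis of_real_eq_1_iff)
  hence "vec_norm u = 1" using vec_norm_pos[OF u u0] by (simp add: power2_eq_1_iff)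
  hence "us ! 0 = u" using ws0 ws(3) n u by (simp add: us_def vec_normalize_def)
  hence "col (mat_of_cols n us) 0 = u" using ws n u by (simp add: us_def)
  thus ?thesis using U by blast
qed

lemma unit_eigenvector_exists:
  assumes A: "(A :: complex mat) \<in> carrier_mat n n" and ev: "eigenvalue A e"
  shows "\<exists>u. u \<in> carrier_vec n \<and> u \<bullet>c u = 1 \<and> A *\<^sub>v u = e \<cdot>\<^sub>v u"
proof -
  from ev obtain v where v: "v \<in> carrier_vec n" "v \<noteq> 0\<^sub>v n" "A *\<^sub>v v = e \<cdot>\<^sub>v v"
    unfolding eigenvalue_def eigenvector_def using A by auto
  have "A *\<^sub>v vec_normalize v = e \<cdot>\<^sub>v vec_normalize v"
    using v A unfolding vec_normalize_def by (simp add: mult_mat_vec smult_smult_assoc mult.commute)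
  thus ?thesis using v cscalar_prod_vec_normalize_self[OF v(1,2)] by (intro exI[of _ "vec_normalize v"], auto)
qed

section \<open>Spectral theorem for Hermitian matrices\<close>

definition cons_diag :: "complex \<Rightarrow> complex mat \<Rightarrow> complex mat" where
  "cons_diag c M = mat (Suc (dim_row M)) (Suc (dim_col M)) (\<lambda>(i, j).
     if i = 0 \<and> j = 0 then c else if i = 0 \<or> j = 0 then 0 else M $$ (i - 1, j - 1))"

lemma cons_diag_carrier [simp]: "M \<in> carrier_mat m k \<Longrightarrow> cons_diag c M \<in> carrier_mat (Suc m) (Suc k)"
  unfolding cons_diag_def carrier_mat_def by auto

lemma cons_diag_mult:
  assumes M: "M \<in> carrier_mat m m" and M': "M' \<in> carrier_mat m m"
  shows "cons_diag c M * cons_diag c' M' = cons_diag (c * c') (M * M')"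
proof (rule eq_matI)
  fix i j assume "i < dim_row (cons_diag (c * c') (M * M'))" "j < dim_col (cons_diag (c * c') (M * M'))"
  hence i: "i < Suc m" and j: "j < Suc m" using M M' by (auto simp: cons_diag_def)
  have "(cons_diag c M * cons_diag c' M') $$ (i, j) =
      (\<Sum>l<Suc m. cons_diag c M $$ (i, l) * cons_diag c' M' $$ (l, j))"
    by (rule index_mult_mat_sum, insert M M' i j, auto)
  also have "\<dots> = cons_diag c M $$ (i, 0) * cons_diag c' M' $$ (0, j) +
      (\<Sum>l<m. cons_diag c M $$ (i, Suc l) * cons_diag c' M' $$ (Suc l, j))"
    by (rule sum.lessThan_Suc_shift)
  also have "\<dots> = cons_diag (c * c') (M * M') $$ (i, j)"
    using M M' i j by (cases i; cases j; auto simp: cons_diag_def row_col_scalar_prod)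
  finally show "(cons_diag c M * cons_diag c' M') $$ (i, j) = cons_diag (c * c') (M * M') $$ (i, j)" .
qed (insert M M', auto simp: cons_diag_def)

lemma cons_diag_adjoint: "mat_adjoint (cons_diag c M) = cons_diag (cnj c) (mat_adjoint M)"
  by (rule eq_matI, auto simp: cons_diag_def)

lemma cons_diag_one: "cons_diag 1 (1\<^sub>m m) = 1\<^sub>m (Suc m)"
  by (rule eq_matI, auto simp: cons_diag_def)

lemma unitary_cons_diag: "unitary m U \<Longrightarrow> unitary (Suc m) (cons_diag 1 U)"
  unfolding unitary_def
  by (simp add: cons_diag_adjoint cons_diag_mult[of _ m] cons_diag_one)

definition real_diag_mat :: "nat \<Rightarrow> (nat \<Rightarrow> real) \<Rightarrow> complex mat" where
  "real_diag_mat n d = mat n n (\<lambda>(i, j). if i = j then complex_of_real (d i) else 0)"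

lemma real_diag_mat_carrier [simp]: "real_diag_mat n d \<in> carrier_mat n n"
  unfolding real_diag_mat_def by auto

lemma real_diag_mat_dim [simp]: "dim_row (real_diag_mat n d) = n" "dim_col (real_diag_mat n d) = n"
  unfolding real_diag_mat_def by auto

lemma real_diag_mat_Suc:
  "real_diag_mat (Suc m) d = cons_diag (complex_of_real (d 0)) (real_diag_mat m (\<lambda>i. d (Suc i)))"
  by (rule eq_matI, auto simp: cons_diag_def real_diag_mat_def)

lemma real_diag_mat_adjoint [simp]: "mat_adjoint (real_diag_mat n d) = real_diag_mat n d"
  by (rule eq_matI, auto simp: real_diag_mat_def)

lemma mult_real_diag_mat_index:
  assumes U: "U \<in> carrier_mat m n" and a: "a < m" and i: "i < n"
  shows "(U * real_diag_mat n d) $$ (a, i) = U $$ (a, i) * complex_of_real (d i)"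
proof -
  have "(U * real_diag_mat n d) $$ (a, i) = (\<Sum>l<n. U $$ (a, l) * real_diag_mat n d $$ (l, i))"
    by (rule index_mult_mat_sum, insert U a i, auto)
  also have "\<dots> = (\<Sum>l\<in>{i}. U $$ (a, l) * real_diag_mat n d $$ (l, i))"
    by (rule sum.mono_neutral_right, insert i, auto simp: real_diag_mat_def)
  finally show ?thesis using i by (simp add: real_diag_mat_def)
qed

lemma real_diag_mat_mult: "real_diag_mat n d * real_diag_mat n d' = real_diag_mat n (\<lambda>i. d i * d' i)"
proof (rule eq_matI)
  fix i j assume "i < dim_row (real_diag_mat n (\<lambda>i. d i * d' i))" "j < dim_col (real_diag_mat n (\<lambda>i. d i * d' i))"
  hence "i < n" "j < n" by auto
  thus "(real_diag_mat n d * real_diag_mat n d') $$ (i, j) = real_diag_mat n (\<lambda>i. d i * d' i) $$ (i, j)"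
    by (subst mult_real_diag_mat_index[of _ n n], auto simp: real_diag_mat_def)
qed auto

definition spectral_decomp :: "nat \<Rightarrow> complex mat \<Rightarrow> complex mat \<Rightarrow> (nat \<Rightarrow> real) \<Rightarrow> bool" where
  "spectral_decomp n A U d \<longleftrightarrow> unitary n U \<and> A = U * real_diag_mat n d * mat_adjoint U"

lemma hermitian_deflate:
  assumes A: "A \<in> carrier_mat (Suc m) (Suc m)" and AH: "mat_adjoint A = A"
    and U: "unitary (Suc m) U" and ev: "A *\<^sub>v col U 0 = e \<cdot>\<^sub>v col U 0"
  shows "\<exists>B. B \<in> carrier_mat m m \<and> mat_adjoint B = B \<and>
    mat_adjoint U * A * U = cons_diag (complex_of_real (Re e)) B"
proof -
  let ?n = "Suc m"
  have Uc: "U \<in> carrier_mat ?n ?n" using unitary_carrier[OF U] .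
  define A' where "A' = mat_adjoint U * A * U"
  have A'c: "A' \<in> carrier_mat ?n ?n" unfolding A'_def using Uc A by auto
  have A'H: "mat_adjoint A' = A'"
    unfolding A'_def using Uc A AH by (simp add: adjoint_mult_dims assoc_mult_mat_dims)
  have col0: "A' $$ (i, 0) = (if i = 0 then e else 0)" if i: "i < ?n" for i
  proof -
    have "A' $$ (i, 0) = row (mat_adjoint U) i \<bullet> (A *\<^sub>v col U 0)"
      unfolding A'_def using Uc A i by (simp add: assoc_mult_mat_dims mult_mat_vec_def)
    also have "\<dots> = e * (mat_adjoint U * U) $$ (i, 0)"
      unfolding ev using Uc i by simp
    finally show ?thesis unfolding unitary_adjoint_mult[OF U] using i by auto
  qed
  have herm: "A' $$ (i, j) = cnj (A' $$ (j, i))" if "i < ?n" "j < ?n" for i j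
    using arg_cong[OF A'H, of "\<lambda>M. M $$ (i, j)"] that A'c by simp
  have e_real: "cnj e = e"
    using herm[of 0 0] col0[of 0] by simp
  hence e: "complex_of_real (Re e) = e" by (simp add: complex_eq_iff)
  define B where "B = mat m m (\<lambda>(i, j). A' $$ (Suc i, Suc j))"
  have "B \<in> carrier_mat m m" unfolding B_def by auto
  moreover have "mat_adjoint B = B"
  proof (rule eq_matI)
    fix i j assume "i < dim_row B" "j < dim_col B"
    thus "mat_adjoint B $$ (i, j) = B $$ (i, j)"
      using herm[of "Suc i" "Suc j"] by (simp add: B_def)
  qed (simp_all add: B_def)
  moreover have "A' = cons_diag e B"
  proof (rule eq_matI)
    fix i j assume "i < dim_row (cons_diag e B)" "j < dim_col (cons_diag e B)"
    hence i: "i < ?n" and j: "j < ?n" unfolding B_def cons_diag_def by auto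
    have row0: "A' $$ (0, j) = (if j = 0 then e else 0)"
      using herm[of 0 j] col0[OF j] j e_real by auto
    show "A' $$ (i, j) = cons_diag e B $$ (i, j)"
      using i j col0[OF i] row0 unfolding cons_diag_def B_def by (cases i; cases j; auto)
  qed (insert A'c, auto simp: B_def cons_diag_def)
  ultimately show ?thesis unfolding A'_def e by blast
qed

lemma spectral_decomp_deflated:
  assumes A: "A \<in> carrier_mat (Suc m) (Suc m)" and U1: "unitary (Suc m) U1"
    and A': "mat_adjoint U1 * A * U1 = cons_diag (complex_of_real r) B"
    and B: "spectral_decomp m B U2 d2"
  shows "spectral_decomp (Suc m) A (U1 * cons_diag 1 U2) (\<lambda>i. if i = 0 then r else d2 (i - 1))"
proof -
  let ?n = "Suc m" and ?d = "\<lambda>i. if i = 0 then r else d2 (i - 1)"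
  have U2: "unitary m U2" and B_eq: "B = U2 * real_diag_mat m d2 * mat_adjoint U2"
    using B unfolding spectral_decomp_def by auto
  have U1c: "U1 \<in> carrier_mat ?n ?n" and Ec: "cons_diag 1 U2 \<in> carrier_mat ?n ?n"
    using U1 U2 unitary_carrier by auto
  have "U1 * cons_diag 1 U2 * real_diag_mat ?n ?d * mat_adjoint (U1 * cons_diag 1 U2) =
      U1 * (cons_diag 1 U2 * real_diag_mat ?n ?d * mat_adjoint (cons_diag 1 U2)) * mat_adjoint U1"
    using U1c Ec by (simp add: adjoint_mult[OF U1c Ec] assoc_mult_mat_dims)
  also have "cons_diag 1 U2 * real_diag_mat ?n ?d * mat_adjoint (cons_diag 1 U2) =
      mat_adjoint U1 * A * U1"
    unfolding A' B_eq real_diag_mat_Suc cons_diag_adjoint using unitary_carrier[OF U2]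
    by (simp add: cons_diag_mult[of _ m])
  also have "U1 * (mat_adjoint U1 * A * U1) * mat_adjoint U1 = (U1 * mat_adjoint U1) * A * (U1 * mat_adjoint U1)"
    using U1c A by (simp add: assoc_mult_mat_dims)
  also have "\<dots> = A"
    using A unfolding unitary_mult_adjoint[OF U1] by simp
  finally show ?thesis
    using unitary_mult[OF U1 unitary_cons_diag[OF U2]] unfolding spectral_decomp_def by simp
qed

theorem hermitian_spectral_decomp:
  "(A :: complex mat) \<in> carrier_mat n n \<Longrightarrow> mat_adjoint A = A \<Longrightarrow> \<exists>U d. spectral_decomp n A U d"
proof (induction n arbitrary: A)
  case 0
  hence "A = 1\<^sub>m 0 * real_diag_mat 0 (\<lambda>_. 0) * mat_adjoint (1\<^sub>m 0)" by (intro eq_matI, auto)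
  thus ?case using unitary_one unfolding spectral_decomp_def by blast
next
  case (Suc m A)
  have A: "A \<in> carrier_mat (Suc m) (Suc m)" and AH: "mat_adjoint A = A" using Suc.prems by auto
  obtain es where cp: "char_poly A = (\<Prod>a\<leftarrow>es. [:- a, 1:])" and "length es = Suc m"
    using char_poly_factorized[OF A] by auto
  then obtain e es' where "es = e # es'" by (cases es, auto)
  hence "eigenvalue A e" using eigenvalue_root_char_poly[OF A] cp by simp
  then obtain u where u: "u \<in> carrier_vec (Suc m)" "u \<bullet>c u = 1" "A *\<^sub>v u = e \<cdot>\<^sub>v u"
    using unit_eigenvector_exists[OF A] by blast
  obtain U1 where U1: "unitary (Suc m) U1" and "col U1 0 = u"
    using unitary_with_first_col[OF u(1,2)] by blast
  then obtain B where B: "B \<in> carrier_mat m m" "mat_adjoint B = B"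
    and A': "mat_adjoint U1 * A * U1 = cons_diag (complex_of_real (Re e)) B"
    using hermitian_deflate[OF A AH U1] u(3) by blast
  obtain U2 d2 where "spectral_decomp m B U2 d2" using Suc.IH[OF B] by blast
  thus ?case using spectral_decomp_deflated[OF A U1 A'] by blast
qed

section \<open>Trace and Hilbert--Schmidt norm\<close>

lemma trace_mult_comm:
  assumes A: "(A :: complex mat) \<in> carrier_mat n m" and B: "B \<in> carrier_mat m n"
  shows "trace (A * B) = trace (B * A)"
proof -
  have "trace (A * B) = (\<Sum>i<n. \<Sum>l<m. A $$ (i, l) * B $$ (l, i))"
    unfolding trace_def using A B by (auto simp: row_col_scalar_prod intro!: sum.cong)
  also have "\<dots> = (\<Sum>l<m. \<Sum>i<n. B $$ (l, i) * A $$ (i, l))"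
    by (subst sum.swap, simp add: mult.commute)
  also have "\<dots> = trace (B * A)"
    unfolding trace_def using A B by (auto simp: row_col_scalar_prod intro!: sum.cong)
  finally show ?thesis .
qed

lemma trace_add: "(A :: complex mat) \<in> carrier_mat n n \<Longrightarrow> B \<in> carrier_mat n n \<Longrightarrow> trace (A + B) = trace A + trace B"
  unfolding trace_def by (auto simp: sum.distrib)

lemma trace_minus: "(A :: complex mat) \<in> carrier_mat n n \<Longrightarrow> B \<in> carrier_mat n n \<Longrightarrow> trace (A - B) = trace A - trace B"
  unfolding trace_def by (auto simp: sum_subtractf)

lemma trace_smult: "(A :: complex mat) \<in> carrier_mat n n \<Longrightarrow> trace (c \<cdot>\<^sub>m A) = c * trace A"
  unfolding trace_def by (auto simp: sum_distrib_left)

lemma trace_adjoint: "(A :: complex mat) \<in> carrier_mat n n \<Longrightarrow> trace (mat_adjoint A) = cnj (trace A)"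
  unfolding trace_def by auto

lemma trace_unitary_conj:
  assumes U: "unitary n U" and X: "X \<in> carrier_mat n n"
  shows "trace (U * X * mat_adjoint U) = trace X"
proof -
  have "trace (U * X * mat_adjoint U) = trace (mat_adjoint U * (U * X))"
    using unitary_carrier[OF U] X by (intro trace_mult_comm[of _ n n], auto)
  thus ?thesis using unitary_cancel_left[OF U, of X] X by auto
qed

lemma trace_adjoint_mult:
  assumes X: "(X :: complex mat) \<in> carrier_mat n n" and Y: "Y \<in> carrier_mat n n"
  shows "trace (mat_adjoint X * Y) = (\<Sum>p\<in>{..<n} \<times> {..<n}. cnj (X $$ p) * Y $$ p)"
proof -
  have "trace (mat_adjoint X * Y) = (\<Sum>a<n. \<Sum>l<n. cnj (X $$ (l, a)) * Y $$ (l, a))"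
    unfolding trace_def using X Y by (auto simp: row_col_scalar_prod intro!: sum.cong)
  also have "\<dots> = (\<Sum>p\<in>{..<n} \<times> {..<n}. cnj (X $$ p) * Y $$ p)"
    by (subst sum.swap, simp add: sum.cartesian_product)
  finally show ?thesis .
qed

lemma trace_adjoint_mult_self:
  assumes X: "(X :: complex mat) \<in> carrier_mat n n"
  shows "trace (mat_adjoint X * X) = complex_of_real (\<Sum>p\<in>{..<n} \<times> {..<n}. (cmod (X $$ p))^2)"
  unfolding trace_adjoint_mult[OF X X] of_real_sum
  by (intro sum.cong refl, metis complex_norm_square mult.commute)

lemma hs_norm_sq_entries:
  assumes X: "(X :: complex mat) \<in> carrier_mat n n"
  shows "(hs_norm X)^2 = (\<Sum>p\<in>{..<n} \<times> {..<n}. (cmod (X $$ p))^2)"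
  unfolding hs_norm_def trace_adjoint_mult_self[OF X] by (simp add: sum_nonneg)

lemma hs_norm_nonneg: "(X :: complex mat) \<in> carrier_mat n n \<Longrightarrow> hs_norm X \<ge> 0"
  unfolding hs_norm_def trace_adjoint_mult_self[of X n] by (simp add: sum_nonneg)

lemma hs_norm_sq_Re_trace:
  assumes X: "(X :: complex mat) \<in> carrier_mat n n"
  shows "(hs_norm X)^2 = Re (trace (mat_adjoint X * X))"
  unfolding hs_norm_sq_entries[OF X] trace_adjoint_mult_self[OF X] by simp

lemma cmod_trace_adjoint_mult_le:
  assumes X: "(X :: complex mat) \<in> carrier_mat n n" and Y: "Y \<in> carrier_mat n n"
  shows "cmod (trace (mat_adjoint X * Y)) \<le> hs_norm X * hs_norm Y"
proof -
  let ?I = "{..<n} \<times> {..<n}"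
  have "cmod (trace (mat_adjoint X * Y)) \<le> (\<Sum>p\<in>?I. cmod (X $$ p) * cmod (Y $$ p))"
    unfolding trace_adjoint_mult[OF X Y] by (rule order_trans[OF norm_sum], simp add: norm_mult)
  moreover have "(\<Sum>p\<in>?I. cmod (X $$ p) * cmod (Y $$ p))^2 \<le> (hs_norm X * hs_norm Y)^2"
    unfolding power_mult_distrib hs_norm_sq_entries[OF X] hs_norm_sq_entries[OF Y]
    by (rule Cauchy_Schwarz_ineq_sum)
  hence "(\<Sum>p\<in>?I. cmod (X $$ p) * cmod (Y $$ p)) \<le> hs_norm X * hs_norm Y"
    by (rule power2_le_imp_le) (use hs_norm_nonneg[OF X] hs_norm_nonneg[OF Y] in simp)
  ultimately show ?thesis by linarith
qed

lemma hs_norm_smult: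
  assumes X: "(X :: complex mat) \<in> carrier_mat n n"
  shows "hs_norm (c \<cdot>\<^sub>m X) = cmod c * hs_norm X"
proof -
  have "(hs_norm (c \<cdot>\<^sub>m X))^2 = (cmod c * hs_norm X)^2"
    unfolding power_mult_distrib hs_norm_sq_entries[OF X] hs_norm_sq_entries[OF smult_carrier_mat[OF X]]
    using X by (auto simp: sum_distrib_left norm_mult power_mult_distrib intro!: sum.cong)
  thus ?thesis using hs_norm_nonneg[OF X] hs_norm_nonneg[OF smult_carrier_mat[OF X]]
    by (simp add: power2_eq_iff_nonneg)
qed

lemma hs_norm_eq_0_iff:
  assumes X: "(X :: complex mat) \<in> carrier_mat n n"
  shows "hs_norm X = 0 \<longleftrightarrow> X = 0\<^sub>m n n"
proof
  assume "hs_norm X = 0"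
  hence "\<forall>p\<in>{..<n} \<times> {..<n}. (cmod (X $$ p))^2 = 0"
    using hs_norm_sq_entries[OF X] by (simp add: sum_nonneg_eq_0_iff)
  thus "X = 0\<^sub>m n n" using X by (intro eq_matI, auto)
qed (simp add: hs_norm_def trace_def)

text \<open>The cross term is \<open>2 Re (i tr (A B))\<close>, which vanishes as \<open>tr (A B)\<close> is real for Hermitian
  \<open>A\<close>, \<open>B\<close>.\<close>

lemma hs_norm_sq_hermitian_parts:
  assumes A: "(A :: complex mat) \<in> carrier_mat n n" and B: "B \<in> carrier_mat n n"
    and AH: "mat_adjoint A = A" and BH: "mat_adjoint B = B"
  shows "(hs_norm (A + \<i> \<cdot>\<^sub>m B))^2 = (hs_norm A)^2 + (hs_norm B)^2"
proof -
  let ?I = "{..<n} \<times> {..<n}"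
  have cm: "(cmod (a + \<i> * b))^2 = (cmod a)^2 + (cmod b)^2 + 2 * Re (\<i> * (cnj a * b))" for a b
    unfolding cmod_power2 by (simp add: power2_eq_square algebra_simps)
  have AB: "A + \<i> \<cdot>\<^sub>m B \<in> carrier_mat n n" using A B by simp
  have "cnj (trace (A * B)) = trace (B * A)"
    using A B AH BH trace_adjoint[of "A * B" n] adjoint_mult[OF A B] by simp
  hence real: "Im (trace (mat_adjoint A * B)) = 0"
    using trace_mult_comm[OF B A] AH by (metis Reals_cnj_iff complex_is_Real_iff)
  have "(hs_norm (A + \<i> \<cdot>\<^sub>m B))^2 =
      (\<Sum>p\<in>?I. (cmod (A $$ p))^2 + (cmod (B $$ p))^2 + 2 * Re (\<i> * (cnj (A $$ p) * B $$ p)))"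
    unfolding hs_norm_sq_entries[OF AB]
    using A B by (intro sum.cong refl, auto simp: cm)
  also have "\<dots> = (hs_norm A)^2 + (hs_norm B)^2 + 2 * Re (\<i> * trace (mat_adjoint A * B))"
    unfolding trace_adjoint_mult[OF A B] hs_norm_sq_entries[OF A] hs_norm_sq_entries[OF B]
    by (simp add: sum.distrib sum_distrib_left Re_sum)
  finally show ?thesis using real by simp
qed

lemma spectral_decomp_carrier: "spectral_decomp n A U d \<Longrightarrow> A \<in> carrier_mat n n"
  unfolding spectral_decomp_def using unitary_carrier[of n U] by auto

lemma spectral_decomp_hermitian: "spectral_decomp n A U d \<Longrightarrow> mat_adjoint A = A"
  unfolding spectral_decomp_def using unitary_carrier[of n U]
  by (simp add: adjoint_mult_dims assoc_mult_mat_dims)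

lemma unitary_conj_real_diag_index:
  assumes U: "U \<in> carrier_mat n n" and a: "a < n" and b: "b < n"
  shows "(U * real_diag_mat n d * mat_adjoint U) $$ (a, b) =
    (\<Sum>i<n. U $$ (a, i) * complex_of_real (d i) * cnj (U $$ (b, i)))"
proof -
  have "(U * real_diag_mat n d * mat_adjoint U) $$ (a, b) =
      (\<Sum>i<n. (U * real_diag_mat n d) $$ (a, i) * mat_adjoint U $$ (i, b))"
    by (rule index_mult_mat_sum, insert U a b, auto)
  also have "\<dots> = (\<Sum>i<n. U $$ (a, i) * complex_of_real (d i) * cnj (U $$ (b, i)))"
    by (intro sum.cong refl, subst mult_real_diag_mat_index[OF U a], insert U b, auto)
  finally show ?thesis .
qed

lemma spectral_decomp_index:
  "spectral_decomp n A U d \<Longrightarrow> a < n \<Longrightarrow> b < n \<Longrightarrow>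
   A $$ (a, b) = (\<Sum>i<n. U $$ (a, i) * complex_of_real (d i) * cnj (U $$ (b, i)))"
  unfolding spectral_decomp_def using unitary_conj_real_diag_index[OF unitary_carrier] by blast

lemma spectral_decomp_adjoint_mult:
  assumes s: "spectral_decomp n A U d"
  shows "spectral_decomp n (mat_adjoint A * A) U (\<lambda>i. (d i)^2)"
proof -
  have U: "unitary n U" and A: "A = U * real_diag_mat n d * mat_adjoint U"
    using s unfolding spectral_decomp_def by auto
  have Uc: "U \<in> carrier_mat n n" using unitary_carrier[OF U] .
  have "mat_adjoint A * A = U * (real_diag_mat n d * (mat_adjoint U * (U * (real_diag_mat n d * mat_adjoint U))))"
    unfolding spectral_decomp_hermitian[OF s] unfolding A using Uc by (simp add: assoc_mult_mat_dims)
  also have "\<dots> = U * (real_diag_mat n d * real_diag_mat n d * mat_adjoint U)"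
    using unitary_cancel_left[OF U, of "real_diag_mat n d * mat_adjoint U"] Uc
    by (simp add: assoc_mult_mat_dims)
  also have "\<dots> = U * real_diag_mat n (\<lambda>i. (d i)^2) * mat_adjoint U"
    unfolding real_diag_mat_mult using Uc by (simp add: assoc_mult_mat_dims power2_eq_square)
  finally show ?thesis using U unfolding spectral_decomp_def by simp
qed

lemma spectral_decomp_trace: "spectral_decomp n A U d \<Longrightarrow> trace A = (\<Sum>i<n. complex_of_real (d i))"
  unfolding spectral_decomp_def using trace_unitary_conj[of n U "real_diag_mat n d"]
  by (simp add: trace_def real_diag_mat_def)

lemma proots_prod_linear: "proots (\<Prod>a\<leftarrow>as. [:- a, 1:]) = mset (as :: complex list)"
proof (induction as)
  case (Cons a as)
  have "0 \<notin> set (map (\<lambda>a. [:- a, 1 :: complex:]) as)" by auto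
  hence "(\<Prod>a\<leftarrow>as. [:- a, 1:]) \<noteq> (0 :: complex poly)"
    by (simp only: prod_list_zero_iff) simp
  thus ?case using Cons proots_mult[of "[:- a, 1:]" "\<Prod>a\<leftarrow>as. [:- a, 1:]"] by simp
qed simp

lemma spectral_decomp_eigvals:
  assumes s: "spectral_decomp n A U d"
  shows "eigvals_mset A = mset (map (\<lambda>i. complex_of_real (d i)) [0..<n])"
proof -
  have U: "unitary n U" and A: "A = U * real_diag_mat n d * mat_adjoint U"
    using s unfolding spectral_decomp_def by auto
  have "similar_mat_wit A (real_diag_mat n d) U (mat_adjoint U)"
    unfolding similar_mat_wit_def Let_def
    using unitary_carrier[OF U] unitary_adjoint_mult[OF U] unitary_mult_adjoint[OF U] A
      spectral_decomp_carrier[OF s] by auto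
  hence "char_poly A = char_poly (real_diag_mat n d)"
    using char_poly_similar unfolding similar_mat_def by blast
  also have "\<dots> = (\<Prod>a\<leftarrow>diag_mat (real_diag_mat n d). [:- a, 1:])"
    by (rule char_poly_upper_triangular[of _ n], auto simp: upper_triangular_def real_diag_mat_def)
  also have "diag_mat (real_diag_mat n d) = map (\<lambda>i. complex_of_real (d i)) [0..<n]"
    unfolding diag_mat_def real_diag_mat_def by auto
  finally show ?thesis unfolding eigvals_mset_def by (simp only: proots_prod_linear)
qed

lemma sum_mset_map_upt: "(\<Sum>x\<in>#mset (map f [0..<n]). g x) = (\<Sum>i<n. g (f i))"
  by (induction n, auto simp: add.commute)

lemma spectral_decomp_vn_entropy:
  "spectral_decomp n A U d \<Longrightarrow> vn_entropy A = - (\<Sum>i<n. eta (d i))"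
  unfolding vn_entropy_def by (simp only: spectral_decomp_eigvals sum_mset_map_upt, simp)

lemma spectral_decomp_trace_norm:
  "spectral_decomp n A U d \<Longrightarrow> trace_norm A = (\<Sum>i<n. \<bar>d i\<bar>)"
  unfolding trace_norm_def
  by (simp only: spectral_decomp_eigvals[OF spectral_decomp_adjoint_mult] sum_mset_map_upt, simp)

lemma spectral_decomp_hs_norm_sq:
  "spectral_decomp n A U d \<Longrightarrow> (hs_norm A)^2 = (\<Sum>i<n. (d i)^2)"
  unfolding hs_norm_def
  by (simp add: spectral_decomp_trace[OF spectral_decomp_adjoint_mult] sum_nonneg
      flip: of_real_sum)

lemma sum_power2_le_power2_sum:
  fixes x :: "nat \<Rightarrow> real"
  shows "(\<And>i. i < n \<Longrightarrow> x i \<ge> 0) \<Longrightarrow> (\<Sum>i<n. (x i)^2) \<le> (\<Sum>i<n. x i)^2"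
proof (induction n)
  case (Suc n)
  have IH: "(\<Sum>i<n. (x i)^2) \<le> (\<Sum>i<n. x i)^2" using Suc by simp
  have "0 \<le> x n" "0 \<le> (\<Sum>i<n. x i)" using Suc.prems by (auto intro: sum_nonneg)
  hence "0 \<le> 2 * (\<Sum>i<n. x i) * x n" by simp
  moreover have "((\<Sum>i<n. x i) + x n)^2 = (\<Sum>i<n. x i)^2 + 2 * (\<Sum>i<n. x i) * x n + (x n)^2"
    by (simp add: power2_eq_square algebra_simps)
  ultimately show ?case using IH by (simp only: sum.lessThan_Suc)
qed simp

lemma hs_norm_le_trace_norm:
  assumes s: "spectral_decomp n A U d"
  shows "hs_norm A \<le> trace_norm A"
proof -
  have "(hs_norm A)^2 \<le> (trace_norm A)^2"
    unfolding spectral_decomp_hs_norm_sq[OF s] spectral_decomp_trace_norm[OF s]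
    using sum_power2_le_power2_sum[of n "\<lambda>i. \<bar>d i\<bar>"] by simp
  thus ?thesis by (rule power2_le_imp_le) (simp add: spectral_decomp_trace_norm[OF s] sum_nonneg)
qed

section \<open>Positive semidefinite and density matrices\<close>

lemma qform_sum:
  assumes A: "A \<in> carrier_mat n n" and w: "w \<in> carrier_vec n"
  shows "qform A w = (\<Sum>a<n. \<Sum>b<n. cnj (w $ a) * A $$ (a, b) * w $ b)"
  unfolding qform_def scalar_prod_def using A w
  by (auto simp: atLeast0LessThan sum_distrib_left scalar_prod_def mult.assoc intro!: sum.cong)

lemma spectral_decomp_qform:
  assumes s: "spectral_decomp n A U d" and w: "w \<in> carrier_vec n"
  shows "qform A w =
    (\<Sum>i<n. complex_of_real (d i * (cmod (\<Sum>b<n. cnj (U $$ (b, i)) * w $ b))^2))"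
proof -
  have "qform A w = (\<Sum>a<n. \<Sum>b<n. cnj (w $ a) *
      (\<Sum>i<n. U $$ (a, i) * complex_of_real (d i) * cnj (U $$ (b, i))) * w $ b)"
    unfolding qform_sum[OF spectral_decomp_carrier[OF s] w]
    by (intro sum.cong refl, simp add: spectral_decomp_index[OF s])
  also have "\<dots> = (\<Sum>a<n. \<Sum>b<n. \<Sum>i<n. complex_of_real (d i) *
      ((cnj (w $ a) * U $$ (a, i)) * (cnj (U $$ (b, i)) * w $ b)))"
    by (simp add: sum_distrib_left sum_distrib_right ac_simps)
  also have "\<dots> = (\<Sum>i<n. \<Sum>a<n. \<Sum>b<n. complex_of_real (d i) *
      ((cnj (w $ a) * U $$ (a, i)) * (cnj (U $$ (b, i)) * w $ b)))"
    by (subst sum.swap, rule sum.cong[OF refl], rule sum.swap)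
  also have "\<dots> = (\<Sum>i<n. complex_of_real (d i) *
      ((\<Sum>a<n. cnj (w $ a) * U $$ (a, i)) * (\<Sum>b<n. cnj (U $$ (b, i)) * w $ b)))"
    unfolding sum_product unfolding sum_distrib_left ..
  also have "\<dots> = (\<Sum>i<n. complex_of_real (d i * (cmod (\<Sum>b<n. cnj (U $$ (b, i)) * w $ b))^2))"
  proof (intro sum.cong refl)
    fix i
    define c where "c = (\<Sum>b<n. cnj (U $$ (b, i)) * w $ b)"
    have "(\<Sum>a<n. cnj (w $ a) * U $$ (a, i)) = cnj c"
      unfolding c_def by (simp add: mult.commute)
    moreover have "cnj c * c = complex_of_real ((cmod c)^2)"
      by (metis complex_norm_square mult.commute)
    ultimately show "complex_of_real (d i) * ((\<Sum>a<n. cnj (w $ a) * U $$ (a, i)) * (\<Sum>b<n. cnj (U $$ (b, i)) * w $ b)) =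
        complex_of_real (d i * (cmod (\<Sum>b<n. cnj (U $$ (b, i)) * w $ b))^2)"
      unfolding c_def[symmetric] by simp
  qed
  finally show ?thesis .
qed

lemma psd_of_spectral_decomp:
  assumes s: "spectral_decomp n A U d" and d: "\<And>i. i < n \<Longrightarrow> d i \<ge> 0"
  shows "psd n A"
  unfolding psd_def
  using spectral_decomp_carrier[OF s] spectral_decomp_hermitian[OF s] d
  by (auto simp: spectral_decomp_qform[OF s] Re_sum Im_sum intro!: sum_nonneg)

lemma spectral_decomp_qform_col:
  assumes s: "spectral_decomp n A U d" and i: "i < n"
  shows "qform A (col U i) = complex_of_real (d i)"
proof -
  have U: "unitary n U" using s unfolding spectral_decomp_def by auto
  have Uc: "U \<in> carrier_mat n n" using unitary_carrier[OF U] .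
  have orth: "(\<Sum>b<n. cnj (U $$ (b, j)) * col U i $ b) = (if j = i then 1 else 0)" if j: "j < n" for j
  proof -
    have "(\<Sum>b<n. cnj (U $$ (b, j)) * col U i $ b) = (mat_adjoint U * U) $$ (j, i)"
      using index_mult_mat_sum[of _ n n U n] Uc i j by (auto intro!: sum.cong)
    thus ?thesis using unitary_adjoint_mult[OF U] i j by auto
  qed
  have "qform A (col U i) = (\<Sum>j<n. complex_of_real (d j * (cmod (if j = i then 1 else 0 :: complex))^2))"
    unfolding spectral_decomp_qform[OF s col_carrier_vec[OF i Uc]]
    by (intro sum.cong refl, simp add: orth)
  also have "\<dots> = (\<Sum>j\<in>{i}. complex_of_real (d j * (cmod (if j = i then 1 else 0 :: complex))^2))"
    by (rule sum.mono_neutral_right, insert i, auto)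
  finally show ?thesis by simp
qed

lemma psd_spectral_decomp_nonneg:
  assumes s: "spectral_decomp n A U d" and p: "psd n A" and i: "i < n"
  shows "d i \<ge> 0"
proof -
  have "U \<in> carrier_mat n n" using s unitary_carrier unfolding spectral_decomp_def by blast
  hence "col U i \<in> carrier_vec n" using i by auto
  hence "Re (qform A (col U i)) \<ge> 0" using p unfolding psd_def by auto
  thus ?thesis unfolding spectral_decomp_qform_col[OF s i] by simp
qed

lemma psd_qform_real:
  "psd n A \<Longrightarrow> w \<in> carrier_vec n \<Longrightarrow> qform A w = complex_of_real (Re (qform A w)) \<and> Re (qform A w) \<ge> 0"
  unfolding psd_def by (auto simp: complex_eq_iff)

lemma psd_block_1_iff: "psd_block 1 n (\<lambda>i j. A) \<longleftrightarrow> psd n A"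
proof
  assume a: "psd_block 1 n (\<lambda>i j. A)"
  have "Im (qform A v) = 0 \<and> Re (qform A v) \<ge> 0" if v: "v \<in> carrier_vec n" for v
    using a[unfolded psd_block_def] v unfolding qform_def Let_def
    by (auto dest!: spec[of _ "\<lambda>_. v"])
  thus "psd n A" using a unfolding psd_block_def psd_def by auto
next
  assume "psd n A"
  thus "psd_block 1 n (\<lambda>i j. A)" unfolding psd_block_def psd_def qform_def Let_def by auto
qed

definition outer_mat :: "nat \<Rightarrow> complex vec \<Rightarrow> complex mat" where
  "outer_mat n w = mat n n (\<lambda>(a, b). w $ a * cnj (w $ b))"

lemma outer_mat_carrier [simp]: "outer_mat n w \<in> carrier_mat n n"
  unfolding outer_mat_def by auto

lemma qform_eq_trace_outer_mat:
  assumes A: "A \<in> carrier_mat n n" and w: "w \<in> carrier_vec n"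
  shows "qform A w = trace (A * outer_mat n w)"
proof -
  have "trace (A * outer_mat n w) = (\<Sum>a<n. \<Sum>l<n. A $$ (a, l) * (w $ l * cnj (w $ a)))"
    unfolding trace_def outer_mat_def using A
    by (auto simp: scalar_prod_def atLeast0LessThan intro!: sum.cong)
  thus ?thesis unfolding qform_sum[OF A w] by (simp add: ac_simps)
qed

lemma psd_outer_mat:
  assumes w: "w \<in> carrier_vec n"
  shows "psd n (outer_mat n w)"
proof -
  have "qform (outer_mat n w) x = complex_of_real ((cmod (\<Sum>a<n. cnj (x $ a) * w $ a))^2)"
    if x: "x \<in> carrier_vec n" for x
  proof -
    define c where "c = (\<Sum>a<n. cnj (x $ a) * w $ a)"
    have "qform (outer_mat n w) x = (\<Sum>a<n. \<Sum>b<n. (cnj (x $ a) * w $ a) * cnj (cnj (x $ b) * w $ b))"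
      unfolding qform_sum[OF outer_mat_carrier x] by (simp add: outer_mat_def ac_simps)
    also have "\<dots> = c * cnj c" unfolding c_def by (simp add: sum_product)
    finally show ?thesis unfolding c_def[symmetric] using complex_norm_square[of c] by simp
  qed
  moreover have "mat_adjoint (outer_mat n w) = outer_mat n w"
    by (rule eq_matI, auto simp: outer_mat_def)
  ultimately show ?thesis unfolding psd_def by auto
qed

lemma trace_outer_mat_col:
  assumes U: "unitary n U" and j: "j < n"
  shows "trace (outer_mat n (col U j)) = 1"
proof -
  have Uc: "U \<in> carrier_mat n n" using unitary_carrier[OF U] .
  have "trace (outer_mat n (col U j)) = (\<Sum>a<n. cnj (U $$ (a, j)) * U $$ (a, j))"
    unfolding trace_def outer_mat_def using Uc j by (auto simp: mult.commute intro!: sum.cong)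
  also have "\<dots> = (mat_adjoint U * U) $$ (j, j)"
    using index_mult_mat_sum[of _ n n U n] Uc j by (auto intro!: sum.cong)
  finally show ?thesis using unitary_adjoint_mult[OF U] j by simp
qed

lemma spectral_decomp_trace_mult:
  assumes s: "spectral_decomp n A W d" and Y: "Y \<in> carrier_mat n n"
  shows "trace (A * Y) = (\<Sum>i<n. complex_of_real (d i) * qform Y (col W i))"
proof -
  have Wc: "W \<in> carrier_mat n n" using s unitary_carrier unfolding spectral_decomp_def by auto
  have Ac: "A \<in> carrier_mat n n" using spectral_decomp_carrier[OF s] .
  let ?f = "\<lambda>a b i. complex_of_real (d i) * (cnj (W $$ (b, i)) * Y $$ (b, a) * W $$ (a, i))"
  have "trace (A * Y) = (\<Sum>a<n. \<Sum>b<n. A $$ (a, b) * Y $$ (b, a))"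
    unfolding trace_def using Ac Y by (auto simp: row_col_scalar_prod intro!: sum.cong)
  also have "\<dots> = (\<Sum>a<n. \<Sum>b<n. \<Sum>i<n. ?f a b i)"
    by (intro sum.cong refl, simp add: spectral_decomp_index[OF s] sum_distrib_left sum_distrib_right ac_simps)
  also have "\<dots> = (\<Sum>a<n. \<Sum>i<n. \<Sum>b<n. ?f a b i)"
    by (rule sum.cong[OF refl], rule sum.swap)
  also have "\<dots> = (\<Sum>i<n. \<Sum>a<n. \<Sum>b<n. ?f a b i)"
    by (rule sum.swap)
  also have "\<dots> = (\<Sum>i<n. \<Sum>b<n. \<Sum>a<n. ?f a b i)"
    by (rule sum.cong[OF refl], rule sum.swap)
  also have "\<dots> = (\<Sum>i<n. complex_of_real (d i) * qform Y (col W i))"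
    using Wc Y by (auto simp: qform_sum sum_distrib_left intro!: sum.cong)
  finally show ?thesis .
qed

lemma sum_qform_unitary_cols:
  assumes W: "unitary n W" and Y: "Y \<in> carrier_mat n n"
  shows "(\<Sum>i<n. qform Y (col W i)) = trace Y"
proof -
  have "real_diag_mat n (\<lambda>_. 1) = 1\<^sub>m n" by (rule eq_matI, auto simp: real_diag_mat_def)
  hence "spectral_decomp n (1\<^sub>m n) W (\<lambda>_. 1)"
    unfolding spectral_decomp_def using W unitary_carrier[OF W] unitary_mult_adjoint[OF W] by simp
  from spectral_decomp_trace_mult[OF this Y] show ?thesis using Y by simp
qed

lemma spectral_decomp_affine:
  assumes s: "spectral_decomp n A U d"
  shows "spectral_decomp n (complex_of_real x \<cdot>\<^sub>m 1\<^sub>m n + complex_of_real y \<cdot>\<^sub>m A) U (\<lambda>i. x + y * d i)"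
proof -
  have U: "unitary n U" using s unfolding spectral_decomp_def by auto
  have Uc: "U \<in> carrier_mat n n" using unitary_carrier[OF U] .
  have Ac: "A \<in> carrier_mat n n" using spectral_decomp_carrier[OF s] .
  have "complex_of_real x \<cdot>\<^sub>m 1\<^sub>m n + complex_of_real y \<cdot>\<^sub>m A = U * real_diag_mat n (\<lambda>i. x + y * d i) * mat_adjoint U"
  proof (rule eq_matI)
    fix a b assume "a < dim_row (U * real_diag_mat n (\<lambda>i. x + y * d i) * mat_adjoint U)"
      "b < dim_col (U * real_diag_mat n (\<lambda>i. x + y * d i) * mat_adjoint U)"
    hence a: "a < n" and b: "b < n" using Uc by auto
    have "(\<Sum>i<n. U $$ (a, i) * cnj (U $$ (b, i))) = (U * mat_adjoint U) $$ (a, b)"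
      using index_mult_mat_sum[of U n n _ n] Uc a b by (auto intro!: sum.cong)
    hence orth: "(\<Sum>i<n. U $$ (a, i) * cnj (U $$ (b, i))) = (if a = b then 1 else 0)"
      using unitary_mult_adjoint[OF U] a b by auto
    have "(U * real_diag_mat n (\<lambda>i. x + y * d i) * mat_adjoint U) $$ (a, b) =
        complex_of_real x * (\<Sum>i<n. U $$ (a, i) * cnj (U $$ (b, i))) +
        complex_of_real y * (\<Sum>i<n. U $$ (a, i) * complex_of_real (d i) * cnj (U $$ (b, i)))"
      unfolding unitary_conj_real_diag_index[OF Uc a b]
      by (simp add: sum_distrib_left sum.distrib algebra_simps)
    also have "\<dots> = (complex_of_real x \<cdot>\<^sub>m 1\<^sub>m n + complex_of_real y \<cdot>\<^sub>m A) $$ (a, b)"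
      unfolding orth spectral_decomp_index[OF s a b, symmetric] using a b Ac by auto
    finally show "(complex_of_real x \<cdot>\<^sub>m 1\<^sub>m n + complex_of_real y \<cdot>\<^sub>m A) $$ (a, b) =
        (U * real_diag_mat n (\<lambda>i. x + y * d i) * mat_adjoint U) $$ (a, b)" by simp
  qed (use Uc Ac in auto)
  thus ?thesis using U unfolding spectral_decomp_def by simp
qed

definition maximally_mixed :: "nat \<Rightarrow> complex mat" where
  "maximally_mixed n = (1 / of_nat n) \<cdot>\<^sub>m 1\<^sub>m n"

lemma maximally_mixed_carrier [simp]: "maximally_mixed n \<in> carrier_mat n n"
  unfolding maximally_mixed_def by auto

lemma maximally_mixed_hermitian: "mat_adjoint (maximally_mixed n) = maximally_mixed n"
  unfolding maximally_mixed_def adjoint_smult by simp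

lemma density_carrier: "density n A \<Longrightarrow> A \<in> carrier_mat n n"
  unfolding density_def psd_def by auto

lemma density_hermitian: "density n A \<Longrightarrow> mat_adjoint A = A"
  unfolding density_def psd_def by auto

lemma density_dim_pos: "density n A \<Longrightarrow> n > 0"
  unfolding density_def psd_def trace_def by (cases n, auto)

lemma density_maximally_mixed:
  assumes "n > 0"
  shows "density n (maximally_mixed n)"
proof -
  have s: "spectral_decomp n (maximally_mixed n) (1\<^sub>m n) (\<lambda>_. 1 / real n)"
    unfolding spectral_decomp_def using unitary_one
    by (auto intro!: eq_matI simp: maximally_mixed_def real_diag_mat_def)
  show ?thesis
    unfolding density_def using psd_of_spectral_decomp[OF s] spectral_decomp_trace[OF s] assms by auto
qed

lemma density_spectral_decomp:
  assumes "density n A"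
  obtains U p where "spectral_decomp n A U p" "\<And>i. i < n \<Longrightarrow> p i \<ge> 0" "(\<Sum>i<n. p i) = 1"
proof -
  obtain U p where s: "spectral_decomp n A U p"
    using hermitian_spectral_decomp[OF density_carrier density_hermitian] assms by blast
  moreover have "p i \<ge> 0" if "i < n" for i
    using psd_spectral_decomp_nonneg[OF s _ that] assms unfolding density_def by auto
  moreover have "(\<Sum>i<n. p i) = 1"
    using spectral_decomp_trace[OF s] assms unfolding density_def by (metis of_real_eq_1_iff of_real_sum)
  ultimately show ?thesis using that by blast
qed

lemma hs_norm_sq_minus_maximally_mixed:
  assumes X: "X \<in> carrier_mat n n" and t: "trace X = 1" and n: "n > 0"
  shows "(hs_norm X)^2 = (hs_norm (X - maximally_mixed n))^2 + 1 / real n"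
proof -
  have nested: "(hs_norm Z)^2 = (\<Sum>a<n. \<Sum>b<n. (cmod (Z $$ (a, b)))^2)" if "Z \<in> carrier_mat n n" for Z
    unfolding hs_norm_sq_entries[OF that] by (simp add: sum.cartesian_product)
  define c where "c = 1 / real n"
  have cm: "(cmod (z - 1 / of_nat n))^2 = (cmod z)^2 - (2 * c * Re z - c^2)" for z
    unfolding cmod_power2 c_def by (simp add: power2_eq_square algebra_simps Re_divide)
  have "(hs_norm (X - maximally_mixed n))^2 = (\<Sum>a<n. \<Sum>b<n.
      (cmod (X $$ (a, b)))^2 - (if a = b then 2 * c * Re (X $$ (a, a)) - c^2 else 0))"
    unfolding nested[OF minus_carrier_mat[OF maximally_mixed_carrier]] using X
    by (intro sum.cong refl, auto simp: maximally_mixed_def cm)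
  also have "\<dots> = (\<Sum>a<n. (\<Sum>b<n. (cmod (X $$ (a, b)))^2) - (2 * c * Re (X $$ (a, a)) - c^2))"
    by (intro sum.cong refl, simp add: sum_subtractf)
  also have "\<dots> = (hs_norm X)^2 - 2 * c * (\<Sum>a<n. Re (X $$ (a, a))) + real n * c^2"
    unfolding nested[OF X] by (simp add: sum_subtractf sum_distrib_left)
  also have "(\<Sum>a<n. Re (X $$ (a, a))) = 1"
    using t X unfolding trace_def by (simp add: Re_sum[symmetric])
  finally show ?thesis unfolding c_def using n by (simp add: power2_eq_square)
qed

lemma density_maximally_mixed_perturbation:
  assumes Y: "Y \<in> carrier_mat n n" and H: "mat_adjoint Y = Y" and t: "trace Y = 0" and n: "n > 0"
  obtains e where "e > 0" "density n (maximally_mixed n + complex_of_real e \<cdot>\<^sub>m Y)"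
proof -
  obtain U d where s: "spectral_decomp n Y U d" using hermitian_spectral_decomp[OF Y H] by blast
  define S where "S = (\<Sum>i<n. \<bar>d i\<bar>)"
  have S0: "S \<ge> 0" unfolding S_def by (simp add: sum_nonneg)
  define e where "e = 1 / (real n * (1 + S))"
  have e0: "e > 0" unfolding e_def using n S0 by simp
  have nonneg: "1 / real n + e * d i \<ge> 0" if i: "i < n" for i
  proof -
    have "\<bar>d i\<bar> \<le> S" unfolding S_def using i by (intro member_le_sum, auto)
    hence "e * \<bar>d i\<bar> \<le> e * (1 + S)" using e0 by (intro mult_left_mono, auto)
    also have "\<dots> = 1 / real n" unfolding e_def using S0 by simp
    finally have "e * \<bar>d i\<bar> \<le> 1 / real n" .
    moreover have "- (e * \<bar>d i\<bar>) \<le> e * d i" using e0 by (simp add: abs_if)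
    ultimately show ?thesis by linarith
  qed
  have "psd n (maximally_mixed n + complex_of_real e \<cdot>\<^sub>m Y)"
    using psd_of_spectral_decomp[OF spectral_decomp_affine[OF s] nonneg]
    by (simp add: maximally_mixed_def)
  moreover have "trace (maximally_mixed n + complex_of_real e \<cdot>\<^sub>m Y) = 1"
    using Y t n by (simp add: trace_add[of _ n] trace_smult maximally_mixed_def trace_def flip: sum_distrib_left)
  ultimately show ?thesis using that e0 unfolding density_def by blast
qed

section \<open>Scalar inequalities\<close>

lemma log_convex_seq_cross_le:
  fixes a :: "nat \<Rightarrow> real"
  assumes nonneg: "\<And>k. a k \<ge> 0" and log_convex: "\<And>k. (a (Suc k))^2 \<le> a k * a (Suc (Suc k))"
    and a0: "a 0 > 0"
  shows "a 1 * a k \<le> a 0 * a (Suc k)"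
proof (induction k)
  case (Suc k)
  show ?case
  proof (cases "a (Suc k) = 0")
    case False
    hence pos: "a (Suc k) > 0" using nonneg[of "Suc k"] by simp
    have "0 < (a (Suc k))^2" using pos by simp
    also have "\<dots> \<le> a k * a (Suc (Suc k))" by (rule log_convex)
    finally have ak: "a k > 0"
      using nonneg[of k] nonneg[of "Suc (Suc k)"] by (simp add: zero_less_mult_iff)
    have "a k * (a 1 * a (Suc k)) = a 1 * a k * a (Suc k)" by simp
    also have "\<dots> \<le> a 0 * a (Suc k) * a (Suc k)"
      using Suc.IH pos by (intro mult_right_mono, auto)
    also have "\<dots> \<le> a 0 * (a k * a (Suc (Suc k)))"
      using log_convex[of k] a0 by (simp add: power2_eq_square mult.assoc)
    finally show ?thesis using ak by (simp add: mult.left_commute)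
  qed (use nonneg a0 in simp)
qed (simp add: mult.commute)

lemma log_convex_seq_power_le:
  fixes a :: "nat \<Rightarrow> real"
  assumes nonneg: "\<And>k. a k \<ge> 0" and log_convex: "\<And>k. (a (Suc k))^2 \<le> a k * a (Suc (Suc k))"
    and a0: "a 0 > 0"
  shows "(a 1)^k * a 0 \<le> (a 0)^k * a k"
proof (induction k)
  case (Suc k)
  have "(a 1)^(Suc k) * a 0 \<le> a 1 * ((a 0)^k * a k)"
    using Suc.IH nonneg[of 1] by (simp add: mult.assoc mult_left_mono)
  also have "\<dots> \<le> (a 0)^k * (a 0 * a (Suc k))"
    using log_convex_seq_cross_le[OF nonneg log_convex a0, of k] a0
    by (simp add: mult.left_commute mult_left_mono)
  finally show ?case by (simp add: ac_simps)
qed simp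

text \<open>A nonnegative log-convex sequence decays no faster than its first ratio, so an
  exponential bound \<open>K C\<^sup>k\<close> forces \<open>a\<^sub>1 \<le> C a\<^sub>0\<close>.\<close>

lemma log_convex_seq_ratio_le:
  fixes a :: "nat \<Rightarrow> real"
  assumes nonneg: "\<And>k. a k \<ge> 0" and log_convex: "\<And>k. (a (Suc k))^2 \<le> a k * a (Suc (Suc k))"
    and bound: "\<And>k. a k \<le> K * C^k" and C: "C \<ge> 0"
  shows "a 1 \<le> C * a 0"
proof (cases "a 0 = 0")
  case True
  thus ?thesis using log_convex[of 0] by simp
next
  case False
  hence a0: "a 0 > 0" using nonneg[of 0] by simp
  show ?thesis
  proof (rule ccontr)
    assume "\<not> a 1 \<le> C * a 0"
    hence lt: "C * a 0 < a 1" by simp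
    hence Cp: "C > 0" using bound[of 1] C by (cases "C = 0") auto
    define q where "q = a 1 / (C * a 0)"
    have q1: "q > 1" unfolding q_def using lt Cp a0 by simp
    obtain k where k: "K / a 0 < q^k" using real_arch_pow[OF q1] by blast
    have "(a 1)^k * a 0 \<le> (a 0)^k * (K * C^k)"
      using log_convex_seq_power_le[OF nonneg log_convex a0, of k] bound[of k] a0
      by (meson order_trans mult_left_mono zero_le_power less_imp_le)
    hence "(a 1)^k * a 0 / ((C * a 0)^k * a 0) \<le> (a 0)^k * (K * C^k) / ((C * a 0)^k * a 0)"
      using Cp a0 by (intro divide_right_mono, auto)
    also have "(a 1)^k * a 0 / ((C * a 0)^k * a 0) = q^k"
      unfolding q_def using a0 by (simp add: power_divide)
    also have "(a 0)^k * (K * C^k) / ((C * a 0)^k * a 0) = K / a 0"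
      using a0 Cp by (simp add: power_mult_distrib)
    finally show False using k by simp
  qed
qed

lemma ln_diff_ge_diff:
  fixes x y :: real
  assumes "0 < x" "x \<le> y" "y \<le> 1"
  shows "y - x \<le> ln y - ln x"
proof -
  have "ln (x / y) \<le> x / y - 1" using assms by (intro ln_le_minus_one) simp
  hence "(y - x) / y \<le> ln y - ln x" using assms by (simp add: ln_div diff_divide_distrib)
  moreover have "y - x \<le> (y - x) / y" using assms by (simp add: le_divide_eq mult_left_le)
  ultimately show ?thesis by linarith
qed

text \<open>The second derivative \<open>1 / x\<close> of \<open>x ln x\<close> is at least \<open>1\<close> on \<open>(0, 1]\<close>.\<close>

lemma x_ln_x_strongly_convex:
  fixes x y :: real
  assumes x: "0 < x" "x \<le> 1" and y: "0 < y" "y \<le> 1"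
  shows "(x - y)^2 / 2 \<le> x * ln x - y * ln y - (ln y + 1) * (x - y)"
proof -
  define f where "f t = t * ln t - y * ln y - (ln y + 1) * (t - y) - (t - y)^2 / 2" for t
  define f' where "f' t = ln t - ln y - (t - y)" for t
  have der: "(f has_real_derivative f' t) (at t)" if "t > 0" for t
    unfolding f_def f'_def using that
    by (auto intro!: derivative_eq_intros simp: power2_eq_square algebra_simps) (simp add: field_simps)
  have "f y \<le> f x"
  proof (cases "y \<le> x")
    case True
    show ?thesis
    proof (rule deriv_nonneg_imp_mono[of y x f f'])
      fix t assume "t \<in> {y..x}"
      thus "(f has_real_derivative f' t) (at t)" "f' t \<ge> 0"
        using der ln_diff_ge_diff[of y t] x y unfolding f'_def by auto
    qed (use True in auto)
  next
    case False
    show ?thesis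
    proof (rule deriv_nonpos_imp_antimono[of x y f f'])
      fix t assume "t \<in> {x..y}"
      thus "(f has_real_derivative f' t) (at t)" "f' t \<le> 0"
        using der ln_diff_ge_diff[of t y] x y unfolding f'_def by auto
    qed (use False in auto)
  qed
  thus ?thesis unfolding f_def by simp
qed

definition eta_minus_half_sq :: "real \<Rightarrow> real" where
  "eta_minus_half_sq x = eta x - x^2 / 2"

lemma eta_minus_half_sq_above_tangent:
  assumes x: "0 \<le> x" "x \<le> 1" and y: "0 < y" "y \<le> 1"
  shows "eta_minus_half_sq y + (ln y + 1 - y) * (x - y) \<le> eta_minus_half_sq x"
proof (cases "x = 0")
  case True
  have "y * (y / 2 - 1) \<le> 0" using y by (intro mult_nonneg_nonpos) auto
  thus ?thesis using True y
    by (simp add: eta_minus_half_sq_def eta_def power2_eq_square algebra_simps)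
next
  case False
  hence "(x - y)^2 / 2 \<le> x * ln x - y * ln y - (ln y + 1) * (x - y)"
    using x y by (intro x_ln_x_strongly_convex) auto
  moreover have "(x - y)^2 / 2 = x * x / 2 + y * y / 2 - x * y"
    by (simp add: power2_eq_square field_simps)
  moreover have "(ln y + 1 - y) * (x - y) = (ln y + 1) * (x - y) - x * y + y * y"
    by (simp add: algebra_simps)
  moreover have "eta_minus_half_sq x = x * ln x - x * x / 2" "eta_minus_half_sq y = y * ln y - y * y / 2"
    using False y by (simp_all add: eta_minus_half_sq_def eta_def power2_eq_square)
  ultimately show ?thesis by linarith
qed

lemma eta_minus_half_sq_jensen:
  fixes m p :: "nat \<Rightarrow> real"
  assumes p: "\<And>i. i < n \<Longrightarrow> 0 \<le> p i \<and> p i \<le> 1" and m: "\<And>i. i < n \<Longrightarrow> 0 \<le> m i"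
    and m1: "(\<Sum>i<n. m i) = 1"
  shows "eta_minus_half_sq (\<Sum>i<n. m i * p i) \<le> (\<Sum>i<n. m i * eta_minus_half_sq (p i))"
proof -
  define q where "q = (\<Sum>i<n. m i * p i)"
  have q0: "q \<ge> 0" unfolding q_def using p m by (intro sum_nonneg, auto)
  have "q \<le> (\<Sum>i<n. m i * 1)" unfolding q_def using p m by (intro sum_mono mult_left_mono, auto)
  hence q1: "q \<le> 1" using m1 by simp
  show ?thesis
  proof (cases "q = 0")
    case True
    hence "\<forall>i\<in>{..<n}. m i * p i = 0"
      using p m unfolding q_def by (subst sum_nonneg_eq_0_iff[symmetric], auto)
    hence "(\<Sum>i<n. m i * eta_minus_half_sq (p i)) = 0"
      by (auto simp: eta_minus_half_sq_def eta_def intro!: sum.neutral)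
    thus ?thesis using True unfolding q_def by (simp add: eta_minus_half_sq_def eta_def)
  next
    case False
    hence qp: "q > 0" using q0 by simp
    define c where "c = ln q + 1 - q"
    have "(\<Sum>i<n. m i * (eta_minus_half_sq q + c * (p i - q))) \<le> (\<Sum>i<n. m i * eta_minus_half_sq (p i))"
      using p m eta_minus_half_sq_above_tangent[OF _ _ qp q1]
      by (intro sum_mono mult_left_mono, auto simp: c_def)
    moreover have "(\<Sum>i<n. m i * (eta_minus_half_sq q + c * (p i - q))) =
        eta_minus_half_sq q * (\<Sum>i<n. m i) + c * ((\<Sum>i<n. m i * p i) - q * (\<Sum>i<n. m i))"
      by (simp add: algebra_simps sum.distrib sum_distrib_left sum_subtractf)
    ultimately show ?thesis using m1 unfolding q_def by simp
  qed
qed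

lemma doubly_stochastic_sum_eta_minus_half_sq_le:
  fixes M :: "nat \<Rightarrow> nat \<Rightarrow> real"
  assumes p: "\<And>i. i < n \<Longrightarrow> 0 \<le> p i \<and> p i \<le> 1"
    and M: "\<And>i j. i < n \<Longrightarrow> j < n \<Longrightarrow> 0 \<le> M j i"
    and rows: "\<And>j. j < n \<Longrightarrow> (\<Sum>i<n. M j i) = 1" and cols: "\<And>i. i < n \<Longrightarrow> (\<Sum>j<n. M j i) = 1"
    and q: "\<And>j. j < n \<Longrightarrow> q j = (\<Sum>i<n. M j i * p i)"
  shows "(\<Sum>j<n. eta_minus_half_sq (q j)) \<le> (\<Sum>i<n. eta_minus_half_sq (p i))"
proof -
  have "(\<Sum>j<n. eta_minus_half_sq (q j)) \<le> (\<Sum>j<n. \<Sum>i<n. M j i * eta_minus_half_sq (p i))"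
    using eta_minus_half_sq_jensen[OF p M rows] q by (intro sum_mono, auto)
  also have "\<dots> = (\<Sum>i<n. (\<Sum>j<n. M j i) * eta_minus_half_sq (p i))"
    by (subst sum.swap, simp add: sum_distrib_right)
  also have "\<dots> = (\<Sum>i<n. eta_minus_half_sq (p i))" using cols by simp
  finally show ?thesis .
qed

section \<open>Self-dual bistochastic channels\<close>

locale self_dual_bistochastic_channel =
  fixes N :: nat and T :: "complex mat \<Rightarrow> complex mat" and C :: real
  assumes channel: "channel N T" and self_dual: "is_dual N T T"
    and bistochastic: "bistochastic N T T" and contractive: "strictly_contractive N T C"
begin

lemma map_carrier: "A \<in> carrier_mat N N \<Longrightarrow> T A \<in> carrier_mat N N"
  using channel unfolding channel_def linear_map_mat_def by auto

lemma map_add: "A \<in> carrier_mat N N \<Longrightarrow> B \<in> carrier_mat N N \<Longrightarrow> T (A + B) = T A + T B"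
  using channel unfolding channel_def linear_map_mat_def by auto

lemma map_smult: "A \<in> carrier_mat N N \<Longrightarrow> T (c \<cdot>\<^sub>m A) = c \<cdot>\<^sub>m T A"
  using channel unfolding channel_def linear_map_mat_def by auto

lemma map_minus:
  assumes A: "A \<in> carrier_mat N N" and B: "B \<in> carrier_mat N N"
  shows "T (A - B) = T A - T B"
proof -
  have "A - B = A + (-1) \<cdot>\<^sub>m B" "T A - T B = T A + (-1) \<cdot>\<^sub>m T B"
    using A B map_carrier[OF B] by (auto intro!: eq_matI)
  thus ?thesis using A B by (simp add: map_add map_smult)
qed

lemma map_maximally_mixed: "T (maximally_mixed N) = maximally_mixed N"
  using bistochastic unfolding bistochastic_def maximally_mixed_def by (simp add: map_smult)

lemma trace_map_mult:
  "A \<in> carrier_mat N N \<Longrightarrow> B \<in> carrier_mat N N \<Longrightarrow> trace (T A * B) = trace (A * T B)"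
  using self_dual unfolding is_dual_def by auto

lemma trace_map: "A \<in> carrier_mat N N \<Longrightarrow> trace (T A) = trace A"
  using trace_map_mult[of A "1\<^sub>m N"] bistochastic map_carrier[of A]
  unfolding bistochastic_def by simp

lemma map_psd: "psd N A \<Longrightarrow> psd N (T A)"
  using channel unfolding channel_def completely_positive_def psd_block_1_iff[symmetric] by blast

lemma map_density: "density N A \<Longrightarrow> density N (T A)"
  using map_psd trace_map unfolding density_def psd_def by auto

lemma C_nonneg: "C \<ge> 0"
  using contractive unfolding strictly_contractive_def by simp

lemma trace_norm_contraction:
  "density N \<sigma> \<Longrightarrow> density N \<sigma>' \<Longrightarrow> trace_norm (T \<sigma> - T \<sigma>') \<le> C * trace_norm (\<sigma> - \<sigma>')"
  using contractive unfolding strictly_contractive_def by simp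

lemma hs_norm_sq_map_le:
  assumes D: "D \<in> carrier_mat N N" and DH: "mat_adjoint D = D" and TDH: "mat_adjoint (T D) = T D"
  shows "(hs_norm (T D))^2 \<le> hs_norm D * hs_norm (T (T D))"
proof -
  have TD: "T D \<in> carrier_mat N N" using map_carrier[OF D] .
  have "(hs_norm (T D))^2 = Re (trace (T D * T D))"
    using hs_norm_sq_Re_trace[OF TD] TDH by simp
  also have "trace (T D * T D) = trace (mat_adjoint D * T (T D))"
    using trace_map_mult[OF D TD] DH by simp
  also have "Re \<dots> \<le> hs_norm D * hs_norm (T (T D))"
    using complex_Re_le_cmod cmod_trace_adjoint_mult_le[OF D map_carrier[OF TD]] by (rule order_trans)
  finally show ?thesis .
qed

lemma hs_norm_contraction:
  assumes \<sigma>: "density N \<sigma>"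
  shows "hs_norm (T \<sigma> - maximally_mixed N) \<le> C * hs_norm (\<sigma> - maximally_mixed N)"
proof -
  define D where "D k = (T ^^ k) \<sigma> - maximally_mixed N" for k
  have dens: "density N ((T ^^ k) \<sigma>)" for k by (induction k) (use \<sigma> map_density in auto)
  have Dc: "D k \<in> carrier_mat N N" for k
    unfolding D_def by (rule minus_carrier_mat[OF maximally_mixed_carrier])
  have DH: "mat_adjoint (D k) = D k" for k
    unfolding D_def using density_carrier[OF dens] density_hermitian[OF dens]
    by (simp add: adjoint_minus[of _ N N] maximally_mixed_hermitian)
  have TD: "T (D k) = D (Suc k)" for k
    unfolding D_def using density_carrier[OF dens] by (simp add: map_minus map_maximally_mixed)
  have "trace_norm (D k) \<le> trace_norm (D 0) * C^k" for k
  proof (induction k)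
    case (Suc k)
    have "trace_norm (D (Suc k)) \<le> C * trace_norm (D k)"
      using trace_norm_contraction[OF dens density_maximally_mixed[OF density_dim_pos[OF \<sigma>]]]
      unfolding D_def by (simp add: map_maximally_mixed)
    also have "\<dots> \<le> C * (trace_norm (D 0) * C^k)" using Suc C_nonneg by (intro mult_left_mono)
    finally show ?case by (simp add: ac_simps)
  qed simp
  moreover have "hs_norm (D k) \<le> trace_norm (D k)" for k
    using hermitian_spectral_decomp[OF Dc DH] hs_norm_le_trace_norm by blast
  ultimately have "hs_norm (D k) \<le> trace_norm (D 0) * C^k" for k
    by (meson order_trans)
  moreover have "(hs_norm (D (Suc k)))^2 \<le> hs_norm (D k) * hs_norm (D (Suc (Suc k)))" for k
    using hs_norm_sq_map_le[OF Dc DH] DH by (simp add: TD)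
  ultimately have "hs_norm (D 1) \<le> C * hs_norm (D 0)"
    using log_convex_seq_ratio_le[of "\<lambda>k. hs_norm (D k)"] hs_norm_nonneg[OF Dc] C_nonneg by blast
  thus ?thesis unfolding D_def by simp
qed

text \<open>In eigenbases \<open>u\<^sub>i\<close> of \<open>\<sigma>\<close> and \<open>v\<^sub>j\<close> of \<open>T \<sigma>\<close>, the spectrum of \<open>T \<sigma>\<close> is the image of the spectrum
  of \<open>\<sigma>\<close> under \<open>M\<^sub>j\<^sub>i = \<langle>u\<^sub>i, T (v\<^sub>j v\<^sub>j\<^sup>*) u\<^sub>i\<rangle>\<close>, which is doubly stochastic since \<open>T\<close> is
  positive, trace preserving and self-dual.\<close>

lemma spectrum_doubly_stochastic_image:
  assumes sU: "spectral_decomp N \<sigma> U p" and sV: "spectral_decomp N (T \<sigma>) V q"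
  obtains M where "\<And>i j. 0 \<le> M j i"
    and "\<And>j. j < N \<Longrightarrow> (\<Sum>i<N. M j i) = 1" and "\<And>i. i < N \<Longrightarrow> (\<Sum>j<N. M j i) = 1"
    and "\<And>j. j < N \<Longrightarrow> q j = (\<Sum>i<N. M j i * p i)"
proof -
  have U: "unitary N U" and V: "unitary N V" using sU sV unfolding spectral_decomp_def by auto
  have \<sigma>c: "\<sigma> \<in> carrier_mat N N" using spectral_decomp_carrier[OF sU] .
  have cU: "col U i \<in> carrier_vec N" and cV: "col V i \<in> carrier_vec N" for i
    using unitary_carrier[OF U] unitary_carrier[OF V] by auto
  let ?P = "\<lambda>w. T (outer_mat N w)"
  have Pc: "?P w \<in> carrier_mat N N" for w by (rule map_carrier[OF outer_mat_carrier])
  define M where "M j i = Re (qform (?P (col V j)) (col U i))" for j i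
  have psdP: "psd N (?P (col V j))" for j by (rule map_psd[OF psd_outer_mat[OF cV]])
  have M: "qform (?P (col V j)) (col U i) = complex_of_real (M j i)" "M j i \<ge> 0" for i j
    unfolding M_def using psd_qform_real[OF psdP cU] by auto
  have trP: "trace (?P (col W k)) = 1" if "unitary N W" "k < N" for W k
    using trace_map[OF outer_mat_carrier] trace_outer_mat_col[OF that] by simp
  have swap: "qform (?P (col V j)) (col U i) = qform (?P (col U i)) (col V j)" for i j
  proof -
    have "qform (?P (col V j)) (col U i) = trace (?P (col V j) * outer_mat N (col U i))"
      by (rule qform_eq_trace_outer_mat[OF Pc cU])
    also have "\<dots> = trace (outer_mat N (col V j) * ?P (col U i))"
      by (rule trace_map_mult[OF outer_mat_carrier outer_mat_carrier])
    also have "\<dots> = trace (?P (col U i) * outer_mat N (col V j))"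
      by (rule trace_mult_comm[OF outer_mat_carrier Pc])
    finally show ?thesis using qform_eq_trace_outer_mat[OF Pc cV] by simp
  qed
  show ?thesis
  proof
    show "0 \<le> M j i" for i j by (rule M(2))
    show "(\<Sum>i<N. M j i) = 1" if "j < N" for j
    proof -
      have "complex_of_real (\<Sum>i<N. M j i) = trace (?P (col V j))"
        using sum_qform_unitary_cols[OF U Pc[of "col V j"]] by (simp add: M(1))
      thus ?thesis using trP[OF V that] by (simp flip: of_real_sum)
    qed
    show "(\<Sum>j<N. M j i) = 1" if "i < N" for i
    proof -
      have "complex_of_real (\<Sum>j<N. M j i) = trace (?P (col U i))"
        using sum_qform_unitary_cols[OF V Pc[of "col U i"]] by (simp add: swap M(1)[symmetric])
      thus ?thesis using trP[OF U that] by (simp flip: of_real_sum)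
    qed
    show "q j = (\<Sum>i<N. M j i * p i)" if j: "j < N" for j
    proof -
      have "complex_of_real (q j) = trace (T \<sigma> * outer_mat N (col V j))"
        using spectral_decomp_qform_col[OF sV j] qform_eq_trace_outer_mat[OF map_carrier[OF \<sigma>c] cV] by simp
      also have "\<dots> = trace (\<sigma> * ?P (col V j))" by (rule trace_map_mult[OF \<sigma>c outer_mat_carrier])
      also have "\<dots> = complex_of_real (\<Sum>i<N. M j i * p i)"
        unfolding spectral_decomp_trace_mult[OF sU Pc] M(1) by (simp add: mult.commute)
      finally show ?thesis by (simp only: of_real_eq_iff)
    qed
  qed
qed

lemma entropy_gain_ge_hs_norm_sq_drop:
  assumes \<sigma>: "density N \<sigma>"
  shows "((hs_norm \<sigma>)^2 - (hs_norm (T \<sigma>))^2) / 2 \<le> vn_entropy (T \<sigma>) - vn_entropy \<sigma>"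
proof -
  obtain U p where sU: "spectral_decomp N \<sigma> U p" and p0: "\<And>i. i < N \<Longrightarrow> p i \<ge> 0"
    and p1: "(\<Sum>i<N. p i) = 1"
    using density_spectral_decomp[OF \<sigma>] by blast
  obtain V q where sV: "spectral_decomp N (T \<sigma>) V q"
    using density_spectral_decomp[OF map_density[OF \<sigma>]] by blast
  have p: "0 \<le> p i \<and> p i \<le> 1" if "i < N" for i
    using p0[OF that] member_le_sum[of i "{..<N}" p] p0 p1 that by auto
  obtain M where "\<And>i j. 0 \<le> M j i" "\<And>j. j < N \<Longrightarrow> (\<Sum>i<N. M j i) = 1"
    "\<And>i. i < N \<Longrightarrow> (\<Sum>j<N. M j i) = 1" "\<And>j. j < N \<Longrightarrow> q j = (\<Sum>i<N. M j i * p i)"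
    using spectrum_doubly_stochastic_image[OF sU sV] by blast
  hence "(\<Sum>j<N. eta_minus_half_sq (q j)) \<le> (\<Sum>i<N. eta_minus_half_sq (p i))"
    using doubly_stochastic_sum_eta_minus_half_sq_le[of N p M q] p by blast
  thus ?thesis
    unfolding spectral_decomp_vn_entropy[OF sU] spectral_decomp_vn_entropy[OF sV]
      spectral_decomp_hs_norm_sq[OF sU] spectral_decomp_hs_norm_sq[OF sV]
    by (simp add: eta_minus_half_sq_def sum_subtractf flip: sum_divide_distrib)
qed

lemma entropy_gain_ge:
  assumes \<sigma>: "density N \<sigma>"
  shows "(1 - C^2) / 2 * (hs_norm (\<sigma> - maximally_mixed N))^2 \<le> vn_entropy (T \<sigma>) - vn_entropy \<sigma>"
proof -
  let ?J = "maximally_mixed N"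
  have \<sigma>c: "\<sigma> \<in> carrier_mat N N" and T\<sigma>c: "T \<sigma> \<in> carrier_mat N N"
    using density_carrier \<sigma> map_density by auto
  have shift: "(hs_norm X)^2 = (hs_norm (X - ?J))^2 + 1 / real N" if "density N X" for X
    using hs_norm_sq_minus_maximally_mixed[OF density_carrier[OF that] _ density_dim_pos[OF that]]
      that unfolding density_def by simp
  have "(hs_norm (T \<sigma> - ?J))^2 \<le> (C * hs_norm (\<sigma> - ?J))^2"
    using hs_norm_contraction[OF \<sigma>] hs_norm_nonneg[OF minus_carrier_mat[OF maximally_mixed_carrier]]
    by (intro power_mono)
  hence "(1 - C^2) / 2 * (hs_norm (\<sigma> - ?J))^2 \<le> ((hs_norm \<sigma>)^2 - (hs_norm (T \<sigma>))^2) / 2"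
    unfolding shift[OF \<sigma>] shift[OF map_density[OF \<sigma>]] by (simp add: power_mult_distrib field_simps)
  also have "\<dots> \<le> vn_entropy (T \<sigma>) - vn_entropy \<sigma>" by (rule entropy_gain_ge_hs_norm_sq_drop[OF \<sigma>])
  finally show ?thesis .
qed

lemma hs_norm_contraction_traceless:
  assumes Y: "Y \<in> carrier_mat N N" and YH: "mat_adjoint Y = Y" and tr: "trace Y = 0" and N: "N > 0"
  shows "mat_adjoint (T Y) = T Y" and "hs_norm (T Y) \<le> C * hs_norm Y"
proof -
  let ?J = "maximally_mixed N"
  obtain e where e: "e > 0" and \<rho>: "density N (?J + complex_of_real e \<cdot>\<^sub>m Y)"
    using density_maximally_mixed_perturbation[OF Y YH tr N] by blast
  define \<rho> where "\<rho> = ?J + complex_of_real e \<cdot>\<^sub>m Y"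
  have \<rho>c: "\<rho> \<in> carrier_mat N N" unfolding \<rho>_def using Y by simp
  have TY: "T Y \<in> carrier_mat N N" by (rule map_carrier[OF Y])
  have \<rho>J: "\<rho> - ?J = complex_of_real e \<cdot>\<^sub>m Y"
    unfolding \<rho>_def using Y by (intro eq_matI, auto simp: maximally_mixed_def)
  have T\<rho>J: "T \<rho> - ?J = complex_of_real e \<cdot>\<^sub>m T Y"
    using map_minus[OF \<rho>c maximally_mixed_carrier] map_smult[OF Y, of "complex_of_real e"]
    unfolding \<rho>J map_maximally_mixed by simp
  have "mat_adjoint (T \<rho> - ?J) = T \<rho> - ?J"
    using density_hermitian[OF map_density[OF \<rho>[folded \<rho>_def]]] map_carrier[OF \<rho>c]
    by (simp add: adjoint_minus[of _ N N] maximally_mixed_hermitian)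
  hence "complex_of_real e \<cdot>\<^sub>m mat_adjoint (T Y) = complex_of_real e \<cdot>\<^sub>m T Y"
    unfolding T\<rho>J adjoint_smult by simp
  thus "mat_adjoint (T Y) = T Y"
    using smult_mat_cancel[of "complex_of_real e" "mat_adjoint (T Y)" N N "T Y"] e TY by simp
  have "e * hs_norm (T Y) \<le> C * (e * hs_norm Y)"
    using hs_norm_contraction[OF \<rho>[folded \<rho>_def]] e
    unfolding T\<rho>J \<rho>J hs_norm_smult[OF TY] hs_norm_smult[OF Y] by simp
  thus "hs_norm (T Y) \<le> C * hs_norm Y" using e by (simp add: algebra_simps)
qed

lemma eigenvalue_bound:
  assumes ev: "map_eigenvalue N T z" and z1: "z \<noteq> 1"
  shows "cmod z \<le> C"
proof -
  obtain X where X: "X \<in> carrier_mat N N" and X0: "X \<noteq> 0\<^sub>m N N" and TX: "T X = z \<cdot>\<^sub>m X"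
    using ev unfolding map_eigenvalue_def by blast
  have N: "N > 0"
  proof (rule ccontr)
    assume "\<not> N > 0"
    hence "X = 0\<^sub>m N N" using X by (intro eq_matI) auto
    thus False using X0 by simp
  qed
  have "z * trace X = trace X" using trace_map[OF X] unfolding TX trace_smult[OF X] .
  hence tr0: "trace X = 0" using z1 by (metis mult_cancel_right1)
  define H where "H = (1 / 2) \<cdot>\<^sub>m (X + mat_adjoint X)"
  define K where "K = (- \<i> / 2) \<cdot>\<^sub>m (X - mat_adjoint X)"
  have Hc: "H \<in> carrier_mat N N" and Kc: "K \<in> carrier_mat N N"
    unfolding H_def K_def using X by auto
  have HH: "mat_adjoint H = H" and KH: "mat_adjoint K = K"
    unfolding H_def K_def using X by (auto intro!: eq_matI simp: algebra_simps)
  have trH: "trace H = 0"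
    unfolding H_def using X tr0 by (simp add: trace_smult[of _ N] trace_add[of _ N] trace_adjoint)
  have trK: "trace K = 0"
    unfolding K_def trace_smult[OF minus_carrier_mat[OF adjoint_carrier[OF X]]]
      trace_minus[OF X adjoint_carrier[OF X]] trace_adjoint[OF X] tr0 by simp
  note TH = hs_norm_contraction_traceless[OF Hc HH trH N]
    and TK = hs_norm_contraction_traceless[OF Kc KH trK N]
  have XHK: "X = H + \<i> \<cdot>\<^sub>m K"
    unfolding H_def K_def using X by (intro eq_matI, auto simp: algebra_simps)
  have TXHK: "T X = T H + \<i> \<cdot>\<^sub>m T K"
    using XHK map_add[OF Hc, of "\<i> \<cdot>\<^sub>m K"] map_smult[OF Kc] Kc by simp
  have "(cmod z * hs_norm X)^2 = (hs_norm (T X))^2"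
    unfolding TX hs_norm_smult[OF X] ..
  also have "\<dots> = (hs_norm (T H))^2 + (hs_norm (T K))^2"
    unfolding TXHK by (rule hs_norm_sq_hermitian_parts[OF map_carrier[OF Hc] map_carrier[OF Kc] TH(1) TK(1)])
  also have "\<dots> \<le> (C * hs_norm H)^2 + (C * hs_norm K)^2"
    using power_mono[OF TH(2) hs_norm_nonneg[OF map_carrier[OF Hc]]]
      power_mono[OF TK(2) hs_norm_nonneg[OF map_carrier[OF Kc]]] by (rule add_mono)
  also have "\<dots> = (C * hs_norm X)^2"
    unfolding XHK power_mult_distrib hs_norm_sq_hermitian_parts[OF Hc Kc HH KH] by (simp add: algebra_simps)
  finally have "cmod z * hs_norm X \<le> C * hs_norm X"
    by (rule power2_le_imp_le) (use C_nonneg hs_norm_nonneg[OF X] in simp)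
  moreover have "hs_norm X > 0"
    using hs_norm_eq_0_iff[OF X] hs_norm_nonneg[OF X] X0 by linarith
  ultimately show ?thesis by simp
qed

end

theorem mainTheorem3:
  fixes N :: nat and T :: "complex mat \<Rightarrow> complex mat" and C :: real
  assumes "channel N T"
    and "is_dual N T T"
    and "bistochastic N T T"
    and "strictly_contractive N T C"
  shows "(\<forall>z. map_eigenvalue N T z \<longrightarrow> z \<noteq> 1 \<longrightarrow> cmod z \<le> C) \<and>
         (\<forall>\<sigma>. density N \<sigma> \<longrightarrow>
            vn_entropy (T \<sigma>) - vn_entropy \<sigma> \<ge>
              (1 - C^2) / 2 * (hs_norm (\<sigma> - (1 / of_nat N) \<cdot>\<^sub>m 1\<^sub>m N))^2)"
proof -
  interpret self_dual_bistochastic_channel N T C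
    using assms by unfold_locales
  show ?thesis
    using eigenvalue_bound entropy_gain_ge unfolding maximally_mixed_def by blast
qed

end
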